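(* Let $c>0$ and $T_M=\varepsilon$. Then for $\varepsilon<\varepsilon_0$ small enough there exist constants $A>0$ and $c_0\in(0,1)$ and a unique solution $f\in C^{2,1/2}(\mathbb R_+)$ of $$f''(y)-cf'(y)-f^4(y)=-\int_0^\infty E(y-\eta)f^4(\eta)d\eta\ (y>0),\qquad f(0)=T_M,\qquad f\ge0,$$ such that $\lim_{y\to\infty}f(y)=f_\infty$ exists and $|f(y)-f_\infty|\le Ae^{-y/2}$ for all $y\ge0$. Moreover $f(y)\ge c_0\varepsilon$ for all $y\ge0$ and $f_\infty\ge c_0\varepsilon$.
   Context: $E(x)=\frac12\int_{|x|}^\infty\frac{e^{-t}}{t}dt$; $\mathbb R_+=[0,\infty)$; $C^{2,1/2}(\mathbb R_+)$ is the space of $C^2$ functions with bounded derivatives up to order 2 and bounded $1/2$-Hölder seminorm of the second derivative. *)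

theory Defs
  imports "HOL-Analysis.Analysis"
begin

text \<open>Kernel E(x) = 1/2 * int_{|x|}^infty e^{-t}/t dt (Lebesgue integral; at x = 0 the
  integral diverges and the Bochner convention gives 0, which is irrelevant since
  {0} is a null set).\<close>
definition E :: "real \<Rightarrow> real" where
  "E x = (1/2) * (LINT t:{\<bar>x\<bar><..}|lborel. exp (- t) / t)"

definition C2half :: "(real \<Rightarrow> real) \<Rightarrow> bool" where
  "C2half f \<longleftrightarrow> (\<exists>f1 f2.
     (\<forall>y\<ge>0. (f has_real_derivative f1 y) (at y within {0..})) \<and>
     (\<forall>y\<ge>0. (f1 has_real_derivative f2 y) (at y within {0..})) \<and>
     continuous_on {0..} f2 \<and>
     bounded (f ` {0..}) \<and> bounded (f1 ` {0..}) \<and> bounded (f2 ` {0..}) \<and>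
     (\<exists>H. \<forall>x\<ge>0. \<forall>y\<ge>0. \<bar>f2 x - f2 y\<bar> \<le> H * sqrt \<bar>x - y\<bar>))"

definition solves_bvp :: "real \<Rightarrow> real \<Rightarrow> (real \<Rightarrow> real) \<Rightarrow> bool" where
  "solves_bvp c eps f \<longleftrightarrow> C2half f \<and>
     (\<forall>y>0. deriv (deriv f) y - c * deriv f y - f y ^ 4
             = - (LINT \<eta>:{0..}|lborel. E (y - \<eta>) * f \<eta> ^ 4)) \<and>
     f 0 = eps \<and> (\<forall>y\<ge>0. f y \<ge> 0)"

definition exp_decay :: "real \<Rightarrow> (real \<Rightarrow> real) \<Rightarrow> real \<Rightarrow> bool" where
  "exp_decay A f L \<longleftrightarrow> (f \<longlongrightarrow> L) at_top \<and>
     (\<forall>y\<ge>0. \<bar>f y - L\<bar> \<le> A * exp (- y / 2))"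

end

(* With N(f)(y) = f(y)^4 - int_0^oo E(y - eta) f(eta)^4 d eta the equation reads
   f'' - c f' = N(f).  For f(0) = eps and bounded f' it is equivalent to f = Phi f, where
   Phi f (y) = eps + int_0^y F and F is the unique bounded solution of F' = c F + N(f).
   Since int E = 1 and int E(x) e^{|x|/2} dx <= 2, N(f) decays like e^{-y/2} whenever f tends
   to its limit L at that rate.  On the functions with f(0) = eps and |f(y) - L| <= A e^{-y/2},
   with A = eps^2 and eps small, Phi is therefore a self-map and a 1/2-contraction for the
   distance max(|L - M|, sup_y e^{y/2} |(f(y) - L) - (g(y) - M)|).  Its fixed point stays within
   2A of eps, hence is at least eps/2; it is C^{2,1/2} because the L^1 modulus of continuity of
   E is O(sqrt d).  Conversely every solution with this decay is a fixed point, so it is unique. *)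

theory Submission
  imports Defs
begin

lemma nn_integral_exp_atLeast:
  fixes a b :: real assumes "a > 0"
  shows "(\<integral>\<^sup>+t. ennreal (exp (-a*t)) * indicator {b..} t \<partial>lborel) = ennreal (exp (-a*b) / a)"
proof -
  have "(\<integral>\<^sup>+t. ennreal (exp (-a*t)) * indicator {b..} t \<partial>lborel) = ennreal (0 - (- exp (-a*b)/a))"
  proof (rule nn_integral_FTC_atLeast)
    show "((\<lambda>x. - exp (-a*x)/a) \<longlongrightarrow> 0) at_top"
      using assms by real_asymp
    fix x show "DERIV (\<lambda>x. - exp (-a*x)/a) x :> exp (-a*x)"
      using assms by (auto intro!: derivative_eq_intros)
  qed auto
  then show ?thesis by simp
qed

lemma
  fixes a b :: real assumes "a > 0"
  shows set_integrable_exp_atLeast: "set_integrable lborel {b..} (\<lambda>t. exp (-a*t))"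
    and set_integral_exp_atLeast: "(LINT t:{b..}|lborel. exp (-a*t)) = exp (-a*b) / a"
proof -
  have "has_bochner_integral lborel (\<lambda>t. indicator {b..} t * exp (-a*t)) (exp (-a*b) / a)"
  proof (rule has_bochner_integral_nn_integral)
    have "\<And>t. ennreal (indicator {b..} t * exp (-a*t)) = ennreal (exp (-a*t)) * indicator {b..} t"
      by (auto simp: indicator_def)
    then show "(\<integral>\<^sup>+t. ennreal (indicator {b..} t * exp (-a*t)) \<partial>lborel) = ennreal (exp (-a*b) / a)"
      using nn_integral_exp_atLeast[OF assms, of b] by simp
  qed (use assms in auto)
  then show "set_integrable lborel {b..} (\<lambda>t. exp (-a*t))"
    "(LINT t:{b..}|lborel. exp (-a*t)) = exp (-a*b) / a"
    unfolding has_bochner_integral_iff set_integrable_def set_lebesgue_integral_def by simp_all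
qed

lemma abs_integral_le_dominating:
  fixes f g :: "real \<Rightarrow> real"
  assumes "integrable lborel g" "f \<in> borel_measurable lborel" "\<And>x. \<bar>f x\<bar> \<le> g x"
  shows "integrable lborel f" "\<bar>integral\<^sup>L lborel f\<bar> \<le> integral\<^sup>L lborel g"
proof -
  show f: "integrable lborel f"
    using assms by (intro Bochner_Integration.integrable_bound[OF assms(1,2)])
      (auto intro: order_trans[OF _ abs_ge_self])
  have "\<bar>integral\<^sup>L lborel f\<bar> \<le> integral\<^sup>L lborel (\<lambda>x. \<bar>f x\<bar>)"
    using integral_norm_bound[of lborel f] by simp
  also have "\<dots> \<le> integral\<^sup>L lborel g"
    using f assms by (intro integral_mono) auto
  finally show "\<bar>integral\<^sup>L lborel f\<bar> \<le> integral\<^sup>L lborel g" .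
qed

lemma holder_half_imp_continuous_on:
  fixes g :: "real \<Rightarrow> real"
  assumes "\<And>x y. x \<in> S \<Longrightarrow> y \<in> S \<Longrightarrow> \<bar>g x - g y\<bar> \<le> C * sqrt \<bar>x - y\<bar>"
  shows "continuous_on S g"
  unfolding continuous_on_iff
proof (intro ballI allI impI)
  fix x e :: real assume x: "x \<in> S" and e: "e > 0"
  define d where "d = (e / (\<bar>C\<bar> + 1))^2"
  show "\<exists>d>0. \<forall>x'\<in>S. dist x' x < d \<longrightarrow> dist (g x') (g x) < e"
  proof (intro exI[of _ d] conjI ballI impI)
    show "d > 0" using e unfolding d_def by simp
    fix x' assume x': "x' \<in> S" and "dist x' x < d"
    then have "sqrt \<bar>x' - x\<bar> < e / (\<bar>C\<bar> + 1)"
      using e real_sqrt_less_mono[of "\<bar>x' - x\<bar>" d] by (simp add: dist_real_def d_def)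
    then have "(\<bar>C\<bar> + 1) * sqrt \<bar>x' - x\<bar> < e"
      by (simp add: field_simps add_pos_nonneg)
    moreover have "\<bar>g x' - g x\<bar> \<le> (\<bar>C\<bar> + 1) * sqrt \<bar>x' - x\<bar>"
      using assms[OF x' x] by (smt (verit) mult_right_mono real_sqrt_ge_zero abs_ge_self)
    ultimately show "dist (g x') (g x) < e" by (simp add: dist_real_def)
  qed
qed

lemma has_real_derivative_integral_atLeast:
  fixes g :: "real \<Rightarrow> real"
  assumes "continuous_on {a..} g" "y \<ge> a"
  shows "((\<lambda>x. integral {a..x} g) has_real_derivative g y) (at y within {a..})"
proof -
  have "((\<lambda>x. integral {a..x} g) has_real_derivative g y) (at y within {a..y+1})"
    using assms by (intro integral_has_real_derivative) (auto intro: continuous_on_subset)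
  moreover have "at y within {a..y+1} = at y within {a..}"
    by (rule at_within_nhd[of _ "{..<y+1}"]) (use assms in auto)
  ultimately show ?thesis by simp
qed

lemma has_real_derivative_at_interior:
  assumes "(f has_real_derivative D) (at y within {0..})" "y > 0"
  shows "(f has_real_derivative D) (at y)"
proof -
  have "(f has_real_derivative D) (at y within {0<..})"
    using assms(1) by (rule has_field_derivative_subset) auto
  then show ?thesis using at_within_open[of y "{0<..}"] assms(2) by simp
qed

lemma deriv_deriv_eq_interior:
  assumes f: "\<And>x. x \<ge> 0 \<Longrightarrow> (f has_real_derivative f1 x) (at x within {0..})"
    and f1: "\<And>x. x \<ge> 0 \<Longrightarrow> (f1 has_real_derivative f2 x) (at x within {0..})"
    and y: "y > 0"
  shows "deriv f y = f1 y" and "deriv (deriv f) y = f2 y"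
proof -
  have d1: "deriv f x = f1 x" if "x > 0" for x
    using has_real_derivative_at_interior[OF f that] that by (intro DERIV_imp_deriv) auto
  then show "deriv f y = f1 y" using y .
  have "(f1 has_real_derivative f2 y) (at y)"
    using has_real_derivative_at_interior[OF f1 y] y by simp
  then have "(deriv f has_real_derivative f2 y) (at y)"
    by (rule has_field_derivative_transform_within_open[where S="{0<..}"]) (use y d1 in auto)
  then show "deriv (deriv f) y = f2 y" by (rule DERIV_imp_deriv)
qed

lemma continuous_on_if_has_derivative_within:
  assumes "\<And>x. x \<in> S \<Longrightarrow> (f has_real_derivative f' x) (at x within S)"
  shows "continuous_on S f"
  unfolding continuous_on_eq_continuous_within using assms by (auto intro: DERIV_continuous)

lemma lipschitz_bounded_imp_holder_half:
  fixes g :: "real \<Rightarrow> real"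
  assumes lip: "\<And>x y. x \<in> S \<Longrightarrow> y \<in> S \<Longrightarrow> \<bar>g x - g y\<bar> \<le> M * \<bar>x - y\<bar>"
    and bdd: "\<And>x. x \<in> S \<Longrightarrow> \<bar>g x\<bar> \<le> B" and M: "M \<ge> 0" and x: "x \<in> S" and y: "y \<in> S"
  shows "\<bar>g x - g y\<bar> \<le> (M + 2*B) * sqrt \<bar>x - y\<bar>"
proof -
  have B: "B \<ge> 0" using bdd[OF x] by simp
  show ?thesis
  proof (cases "\<bar>x - y\<bar> \<le> 1")
    case True
    have "\<bar>x - y\<bar> = sqrt \<bar>x - y\<bar> * sqrt \<bar>x - y\<bar>" by simp
    also have "\<dots> \<le> sqrt \<bar>x - y\<bar> * 1" using True by (intro mult_left_mono) auto
    finally have s: "\<bar>x - y\<bar> \<le> sqrt \<bar>x - y\<bar>" by simp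
    have "\<bar>g x - g y\<bar> \<le> M * \<bar>x - y\<bar>" by (rule lip[OF x y])
    also have "\<dots> \<le> M * sqrt \<bar>x - y\<bar>" using s M by (intro mult_left_mono) auto
    also have "\<dots> \<le> (M + 2*B) * sqrt \<bar>x - y\<bar>" using B by (intro mult_right_mono) auto
    finally show ?thesis .
  next
    case False
    then have s: "1 \<le> sqrt \<bar>x - y\<bar>" by simp
    have "\<bar>g x - g y\<bar> \<le> 2*B" using bdd[OF x] bdd[OF y] by linarith
    also have "\<dots> \<le> 2*B * sqrt \<bar>x - y\<bar>" using s B by (simp add: mult_le_cancel_left1)
    also have "\<dots> \<le> (M + 2*B) * sqrt \<bar>x - y\<bar>" using M by (intro mult_right_mono) auto
    finally show ?thesis .
  qed
qed

lemma bounded_derivative_imp_holder_half: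
  fixes g :: "real \<Rightarrow> real"
  assumes g': "\<And>y. y \<ge> 0 \<Longrightarrow> (g has_real_derivative g' y) (at y within {0..})"
    and M: "\<And>y. y \<ge> 0 \<Longrightarrow> \<bar>g' y\<bar> \<le> M" and B: "\<And>y. y \<ge> 0 \<Longrightarrow> \<bar>g y\<bar> \<le> B"
  shows "\<exists>K. \<forall>x\<ge>0. \<forall>y\<ge>0. \<bar>g x - g y\<bar> \<le> K * sqrt \<bar>x - y\<bar>"
proof -
  have "M \<ge> 0" using M[of 0] by simp
  have "\<bar>g x - g y\<bar> \<le> M * \<bar>x - y\<bar>" if "x \<in> {0..}" "y \<in> {0..}" for x y
    using field_differentiable_bound[of "{0..}" g g' M x y] that g' M by (auto simp: convex_real_interval)
  then have "\<bar>g x - g y\<bar> \<le> (M + 2*B) * sqrt \<bar>x - y\<bar>" if "x \<ge> 0" "y \<ge> 0" for x y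
    by (rule lipschitz_bounded_imp_holder_half[of "{0..}" g M B x y]) (use B \<open>M \<ge> 0\<close> that in simp_all)
  then show ?thesis by blast
qed

section \<open>The kernel E\<close>

text \<open>Writing E as an integral of this kernel and applying Tonelli gives
  int E(x) phi(x) dx = int_{t>0} e^{-t}/(2t) int_{-t}^{t} phi(x) dx dt.\<close>
definition E_kernel :: "real \<Rightarrow> real \<Rightarrow> real" where
  "E_kernel x t = indicator {\<bar>x\<bar><..} t * (exp (-t) / (2*t))"

lemma E_kernel_nonneg: "0 \<le> E_kernel x t"
  by (auto simp: E_kernel_def indicator_def)

lemma borel_measurable_E_kernel[measurable]:
  assumes [measurable]: "f \<in> borel_measurable M" "g \<in> borel_measurable M"
  shows "(\<lambda>p. E_kernel (f p) (g p)) \<in> borel_measurable M"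
proof -
  have "(\<lambda>p. exp (- g p) / (2 * g p)) \<in> borel_measurable M"
    by (intro borel_measurable_divide) measurable
  moreover have "(\<lambda>p. E_kernel (f p) (g p)) =
      (\<lambda>p. if \<bar>f p\<bar> < g p then exp (- g p) / (2 * g p) else 0)"
    by (auto simp: E_kernel_def indicator_def fun_eq_iff)
  ultimately show ?thesis by simp
qed

lemma integrable_E_kernel:
  assumes "x \<noteq> 0" shows "integrable lborel (E_kernel x)"
proof (rule Bochner_Integration.integrable_bound)
  show "integrable lborel (\<lambda>t. indicator {0..} t * exp (-1*t) / (2*\<bar>x\<bar>))"
    using set_integrable_exp_atLeast[of 1 0] unfolding set_integrable_def
    by (intro integrable_divide) simp
  show "AE t in lborel. norm (E_kernel x t) \<le> norm (indicator {0..} t * exp (-1*t) / (2*\<bar>x\<bar>))"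
  proof (rule AE_I2)
    fix t
    show "norm (E_kernel x t) \<le> norm (indicator {0..} t * exp (-1*t) / (2*\<bar>x\<bar>))"
    proof (cases "\<bar>x\<bar> < t")
      case True
      then have "exp (-t) / (2*t) \<le> exp (-t) / (2*\<bar>x\<bar>)"
        using assms by (intro divide_left_mono) auto
      then show ?thesis using True by (auto simp: E_kernel_def indicator_def)
    qed (auto simp: E_kernel_def indicator_def)
  qed
qed measurable

lemma E_eq_integral_E_kernel: "x \<noteq> 0 \<Longrightarrow> E x = integral\<^sup>L lborel (E_kernel x)"
  unfolding E_def E_kernel_def set_lebesgue_integral_def
  by (simp add: integral_mult_right_zero[symmetric] mult_ac)

lemma ennreal_E: "x \<noteq> 0 \<Longrightarrow> ennreal (E x) = (\<integral>\<^sup>+t. ennreal (E_kernel x t) \<partial>lborel)"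
  using E_eq_integral_E_kernel integrable_E_kernel E_kernel_nonneg
  by (simp add: nn_integral_eq_integral)

lemma E_nonneg: "0 \<le> E x"
  unfolding E_def set_lebesgue_integral_def
  by (auto intro!: Bochner_Integration.integral_nonneg simp: indicator_def)

lemma borel_measurable_E[measurable]: "E \<in> borel_measurable borel"
proof -
  have "(\<lambda>x. integral\<^sup>L lborel (E_kernel x)) \<in> borel_measurable lborel"
    by (rule lborel.borel_measurable_lebesgue_integral) (simp add: case_prod_unfold)
  then have "(\<lambda>x. if x = 0 then E 0 else integral\<^sup>L lborel (E_kernel x)) \<in> borel_measurable borel"
    by (simp add: measurable_lborel1)
  moreover have "E = (\<lambda>x. if x = 0 then E 0 else integral\<^sup>L lborel (E_kernel x))"
    by (auto simp: fun_eq_iff E_eq_integral_E_kernel)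
  ultimately show ?thesis by simp
qed

lemma nn_integral_E_mult:
  assumes [measurable]: "\<phi> \<in> borel_measurable borel"
  shows "(\<integral>\<^sup>+x. ennreal (E x) * \<phi> x \<partial>lborel) =
    (\<integral>\<^sup>+t. ennreal (indicator {0<..} t * (exp (-t) / (2*t))) *
         (\<integral>\<^sup>+x. indicator {-t<..<t} x * \<phi> x \<partial>lborel) \<partial>lborel)"
proof -
  have "(\<integral>\<^sup>+x. ennreal (E x) * \<phi> x \<partial>lborel) =
      (\<integral>\<^sup>+x. (\<integral>\<^sup>+t. ennreal (E_kernel x t) \<partial>lborel) * \<phi> x \<partial>lborel)"
    by (intro nn_integral_cong_AE eventually_mono[OF AE_lborel_singleton[of 0]]) (simp add: ennreal_E)
  also have "\<dots> = (\<integral>\<^sup>+x. (\<integral>\<^sup>+t. ennreal (E_kernel x t) * \<phi> x \<partial>lborel) \<partial>lborel)"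
    by (intro nn_integral_cong nn_integral_multc[symmetric]) measurable
  also have "\<dots> = (\<integral>\<^sup>+t. (\<integral>\<^sup>+x. ennreal (E_kernel x t) * \<phi> x \<partial>lborel) \<partial>lborel)"
    by (rule lborel_pair.Fubini'[symmetric]) (simp add: case_prod_unfold)
  also have "\<dots> = (\<integral>\<^sup>+t. ennreal (indicator {0<..} t * (exp (-t) / (2*t))) *
         (\<integral>\<^sup>+x. indicator {-t<..<t} x * \<phi> x \<partial>lborel) \<partial>lborel)"
  proof (rule nn_integral_cong)
    fix t :: real
    have "\<And>x. ennreal (E_kernel x t) * \<phi> x =
        ennreal (indicator {0<..} t * (exp (-t) / (2*t))) * (indicator {-t<..<t} x * \<phi> x)"
      by (auto simp: E_kernel_def indicator_def)
    then show "(\<integral>\<^sup>+x. ennreal (E_kernel x t) * \<phi> x \<partial>lborel) =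
        ennreal (indicator {0<..} t * (exp (-t) / (2*t))) * (\<integral>\<^sup>+x. indicator {-t<..<t} x * \<phi> x \<partial>lborel)"
      by (simp add: nn_integral_cmult)
  qed
  finally show ?thesis .
qed

lemma nn_integral_E: "(\<integral>\<^sup>+x. ennreal (E x) \<partial>lborel) = 1"
proof -
  have "(\<integral>\<^sup>+x. ennreal (E x) \<partial>lborel) = (\<integral>\<^sup>+x. ennreal (E x) * 1 \<partial>lborel)" by simp
  also have "\<dots> = (\<integral>\<^sup>+t. ennreal (indicator {0<..} t * (exp (-t) / (2*t))) *
         (\<integral>\<^sup>+x. indicator {-t<..<t} x * 1 \<partial>lborel) \<partial>lborel)"
    by (rule nn_integral_E_mult) measurable
  also have "\<dots> = (\<integral>\<^sup>+t. ennreal (exp (-1*t)) * indicator {0..} t \<partial>lborel)"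
  proof (intro nn_integral_cong_AE eventually_mono[OF AE_lborel_singleton[of 0]])
    fix t :: real assume "t \<noteq> 0"
    show "ennreal (indicator {0<..} t * (exp (-t) / (2*t))) *
         (\<integral>\<^sup>+x. indicator {-t<..<t} x * 1 \<partial>lborel) = ennreal (exp (-1*t)) * indicator {0..} t"
    proof (cases "t > 0")
      case True
      then have "(\<integral>\<^sup>+x. indicator {-t<..<t} x * 1 \<partial>lborel) = ennreal (2*t)" by simp
      then show ?thesis using True by (simp add: ennreal_mult'[symmetric])
    qed (use \<open>t \<noteq> 0\<close> in \<open>simp add: indicator_def\<close>)
  qed
  also have "\<dots> = 1"
    using nn_integral_exp_atLeast[of 1 0] by simp
  finally show ?thesis .
qed

lemma nn_integral_E_exp_half_le: "(\<integral>\<^sup>+x. ennreal (E x * exp (\<bar>x\<bar>/2)) \<partial>lborel) \<le> 2"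
proof -
  have "(\<integral>\<^sup>+x. ennreal (E x * exp (\<bar>x\<bar>/2)) \<partial>lborel) =
      (\<integral>\<^sup>+x. ennreal (E x) * ennreal (exp (\<bar>x\<bar>/2)) \<partial>lborel)"
    by (simp add: ennreal_mult'' E_nonneg)
  also have "\<dots> = (\<integral>\<^sup>+t. ennreal (indicator {0<..} t * (exp (-t) / (2*t))) *
         (\<integral>\<^sup>+x. indicator {-t<..<t} x * ennreal (exp (\<bar>x\<bar>/2)) \<partial>lborel) \<partial>lborel)"
    by (rule nn_integral_E_mult) measurable
  also have "\<dots> \<le> (\<integral>\<^sup>+t. ennreal (exp (-(1/2)*t)) * indicator {0..} t \<partial>lborel)"
  proof (rule nn_integral_mono)
    fix t :: real
    show "ennreal (indicator {0<..} t * (exp (-t) / (2*t))) *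
         (\<integral>\<^sup>+x. indicator {-t<..<t} x * ennreal (exp (\<bar>x\<bar>/2)) \<partial>lborel)
       \<le> ennreal (exp (-(1/2)*t)) * indicator {0..} t"
    proof (cases "t > 0")
      case True
      have "(\<integral>\<^sup>+x. indicator {-t<..<t} x * ennreal (exp (\<bar>x\<bar>/2)) \<partial>lborel)
          \<le> (\<integral>\<^sup>+x. ennreal (exp (t/2)) * indicator {-t<..<t} x \<partial>lborel)"
        by (intro nn_integral_mono) (auto simp: indicator_def)
      also have "\<dots> = ennreal (exp (t/2)) * ennreal (2*t)"
        using True by (subst nn_integral_cmult_indicator) auto
      also have "\<dots> = ennreal (2*t*exp (t/2))"
        using True by (simp add: ennreal_mult'[symmetric] mult_ac)
      finally have "ennreal (exp (-t) / (2*t)) *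
          (\<integral>\<^sup>+x. indicator {-t<..<t} x * ennreal (exp (\<bar>x\<bar>/2)) \<partial>lborel)
          \<le> ennreal (exp (-t) / (2*t)) * ennreal (2*t*exp (t/2))"
        by (rule mult_left_mono) simp
      also have "\<dots> = ennreal (exp (-(1/2)*t))"
        using True by (simp add: ennreal_mult'[symmetric] exp_add[symmetric])
      finally show ?thesis using True by simp
    qed auto
  qed
  also have "\<dots> = 2"
    using nn_integral_exp_atLeast[of "1/2" 0] by simp
  finally show ?thesis .
qed

lemma integrable_E: "integrable lborel E"
  by (rule integrableI_nonneg) (auto simp: E_nonneg nn_integral_E)

lemma integral_E: "integral\<^sup>L lborel E = 1"
  using nn_integral_E integrable_E E_nonneg by (simp add: integral_eq_nn_integral)

lemma integrable_E_exp_half: "integrable lborel (\<lambda>x. E x * exp (\<bar>x\<bar>/2))"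
proof (rule integrableI_nonneg)
  show "(\<integral>\<^sup>+x. ennreal (E x * exp (\<bar>x\<bar>/2)) \<partial>lborel) < \<infinity>"
    using nn_integral_E_exp_half_le by (simp add: ennreal_less_top le_less_trans top.not_eq_extremum)
qed (auto simp: E_nonneg)

lemma integral_E_exp_half_le: "integral\<^sup>L lborel (\<lambda>x. E x * exp (\<bar>x\<bar>/2)) \<le> 2"
proof -
  have "ennreal (integral\<^sup>L lborel (\<lambda>x. E x * exp (\<bar>x\<bar>/2))) =
      (\<integral>\<^sup>+x. ennreal (E x * exp (\<bar>x\<bar>/2)) \<partial>lborel)"
    using integrable_E_exp_half by (simp add: nn_integral_eq_integral E_nonneg)
  also have "\<dots> \<le> 2"
    by (rule nn_integral_E_exp_half_le)
  finally show ?thesis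
    using ennreal_le_iff[of 2 "integral\<^sup>L lborel (\<lambda>x. E x * exp (\<bar>x\<bar>/2))"] by simp
qed

lemma nn_integral_powr_minus_half: "(\<integral>\<^sup>+t. ennreal (indicator {0..1} t * t powr (-(1/2))) \<partial>lborel) = 2"
proof -
  have "((\<lambda>t::real. t powr (-(1/2))) has_integral (1 powr (-(1/2)+1) / (-(1/2)+1))) {0..1}"
    by (rule has_integral_powr_from_0) simp_all
  then have "((\<lambda>t::real. if t \<in> {0..1} then t powr (-(1/2)) else 0) has_integral 2) UNIV"
    by (subst has_integral_restrict_UNIV) simp
  moreover have "(\<lambda>t::real. indicator {0..1} t * t powr (-(1/2))) =
      (\<lambda>t. if t \<in> {0..1} then t powr (-(1/2)) else 0)"
    by (simp add: fun_eq_iff indicator_def)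
  ultimately have "((\<lambda>t::real. indicator {0..1} t * t powr (-(1/2))) has_integral 2) UNIV"
    by simp
  then show ?thesis
    by (subst nn_integral_has_integral_lborel) (auto simp: indicator_def)
qed

lemma nn_integral_indicator_shift_le:
  fixes t d :: real assumes "t > 0" "d \<ge> 0"
  shows "(\<integral>\<^sup>+x. ennreal \<bar>indicator {-t-d<..<t-d} x - indicator {-t<..<t} x\<bar> \<partial>lborel)
     \<le> ennreal (2 * min d (2*t))"
proof -
  have ind: "ennreal \<bar>indicator A x - indicator B x\<bar> \<le> indicator C1 x + indicator C2 x"
    if "A - B \<subseteq> C1" "B - A \<subseteq> C2" for A B C1 C2 :: "real set" and x
    using that by (cases "x \<in> A"; cases "x \<in> B") (auto simp: indicator_def)
  show ?thesis
  proof (cases "d \<le> 2*t")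
    case True
    have "(\<integral>\<^sup>+x. ennreal \<bar>indicator {-t-d<..<t-d} x - indicator {-t<..<t} x\<bar> \<partial>lborel)
       \<le> (\<integral>\<^sup>+x. indicator {-t-d<..-t} x + indicator {t-d..<t} x \<partial>lborel)"
      using assms by (intro nn_integral_mono ind) auto
    also have "\<dots> = ennreal d + ennreal d"
      using True assms by (simp add: nn_integral_add)
    finally show ?thesis
      using True assms by (simp add: ennreal_plus[symmetric] del: ennreal_plus)
  next
    case False
    have "(\<integral>\<^sup>+x. ennreal \<bar>indicator {-t-d<..<t-d} x - indicator {-t<..<t} x\<bar> \<partial>lborel)
       \<le> (\<integral>\<^sup>+x. indicator {-t-d<..<t-d} x + indicator {-t<..<t} x \<partial>lborel)"
      by (intro nn_integral_mono ind) auto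
    also have "\<dots> = ennreal (2*t) + ennreal (2*t)"
      using assms by (simp add: nn_integral_add)
    finally show ?thesis
      using False assms by (simp add: ennreal_plus[symmetric] del: ennreal_plus)
  qed
qed

lemma min_le_sqrt_mult:
  fixes a b :: real assumes "0 \<le> a" "0 \<le> b"
  shows "min a b \<le> sqrt (a*b)"
proof -
  have "min a b * min a b \<le> a * b"
    using assms by (cases "a \<le> b") (auto intro: mult_mono simp: min_def)
  then have "sqrt (min a b * min a b) \<le> sqrt (a*b)" by (rule real_sqrt_le_mono)
  then show ?thesis using assms by simp
qed

lemma exp_div_mult_min_le:
  fixes t d :: real assumes "d \<ge> 0"
  shows "indicator {0<..} t * (exp (-t) / (2*t)) * (2 * min d (2*t))
     \<le> sqrt (2*d) * (indicator {0..1} t * t powr (-(1/2)) + indicator {1<..} t * exp (-t))"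
proof (cases "t > 0")
  case True
  have "min d (2*t) \<le> sqrt (2*d) * sqrt t"
    using min_le_sqrt_mult[of d "2*t"] True assms by (simp add: real_sqrt_mult mult_ac)
  then have "indicator {0<..} t * (exp (-t) / (2*t)) * (2 * min d (2*t))
      \<le> exp (-t) * (sqrt (2*d) * sqrt t) / t"
    using True by (simp add: divide_right_mono)
  also have "\<dots> = sqrt (2*d) * (exp (-t) / sqrt t)"
    using True by (simp add: field_simps)
  also have "\<dots> \<le> sqrt (2*d) * (indicator {0..1} t * t powr (-(1/2)) + indicator {1<..} t * exp (-t))"
  proof (intro mult_left_mono)
    show "exp (-t) / sqrt t \<le> indicator {0..1} t * t powr (-(1/2)) + indicator {1<..} t * exp (-t)"
    proof (cases "t \<le> 1")
      case True2: True
      have "exp (-t) / sqrt t \<le> 1 / sqrt t"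
        using True by (intro divide_right_mono) auto
      then show ?thesis
        using True True2 by (simp add: indicator_def powr_minus_divide powr_half_sqrt)
    next
      case False
      have "exp (-t) / sqrt t \<le> exp (-t) / 1"
        using False by (intro divide_left_mono) auto
      then show ?thesis using False by (simp add: indicator_def)
    qed
  qed (use assms in simp)
  finally show ?thesis .
qed (auto simp: indicator_def)

lemma ennreal_abs_E_diff_le:
  assumes "x \<noteq> 0" "y \<noteq> 0"
  shows "ennreal \<bar>E x - E y\<bar> \<le> (\<integral>\<^sup>+t. ennreal \<bar>E_kernel x t - E_kernel y t\<bar> \<partial>lborel)"
proof -
  have i: "integrable lborel (E_kernel x)" "integrable lborel (E_kernel y)"
    using integrable_E_kernel assms by auto
  have "\<bar>E x - E y\<bar> \<le> integral\<^sup>L lborel (\<lambda>t. \<bar>E_kernel x t - E_kernel y t\<bar>)"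
    using assms i integral_norm_bound[of lborel "\<lambda>t. E_kernel x t - E_kernel y t"]
    by (simp add: E_eq_integral_E_kernel)
  then have "ennreal \<bar>E x - E y\<bar> \<le> ennreal (integral\<^sup>L lborel (\<lambda>t. \<bar>E_kernel x t - E_kernel y t\<bar>))"
    by (rule ennreal_leI)
  also have "\<dots> = (\<integral>\<^sup>+t. ennreal \<bar>E_kernel x t - E_kernel y t\<bar> \<partial>lborel)"
    using i by (intro nn_integral_eq_integral[symmetric]) auto
  finally show ?thesis .
qed

lemma nn_integral_E_kernel_shift_le:
  fixes d :: real assumes d: "d \<ge> 0"
  shows "(\<integral>\<^sup>+x. ennreal \<bar>E_kernel (x+d) t - E_kernel x t\<bar> \<partial>lborel) \<le>
    ennreal (sqrt (2*d)) * ennreal (indicator {0..1} t * t powr (-(1/2)) + indicator {1<..} t * exp (-t))"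
proof -
  have eq: "\<And>x. ennreal \<bar>E_kernel (x+d) t - E_kernel x t\<bar> =
      ennreal (indicator {0<..} t * (exp (-t) / (2*t))) *
      ennreal \<bar>indicator {-t-d<..<t-d} x - indicator {-t<..<t} x\<bar>"
    by (auto simp: E_kernel_def indicator_def ennreal_mult'[symmetric])
  show ?thesis
  proof (cases "t > 0")
    case True
    have "(\<integral>\<^sup>+x. ennreal \<bar>E_kernel (x+d) t - E_kernel x t\<bar> \<partial>lborel) =
        ennreal (indicator {0<..} t * (exp (-t) / (2*t))) *
        (\<integral>\<^sup>+x. ennreal \<bar>indicator {-t-d<..<t-d} x - indicator {-t<..<t} x\<bar> \<partial>lborel)"
      unfolding eq by (simp add: nn_integral_cmult)
    also have "\<dots> \<le> ennreal (indicator {0<..} t * (exp (-t) / (2*t))) * ennreal (2 * min d (2*t))"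
      using True d by (intro mult_left_mono nn_integral_indicator_shift_le) auto
    also have "\<dots> = ennreal (indicator {0<..} t * (exp (-t) / (2*t)) * (2 * min d (2*t)))"
      using True d by (simp add: ennreal_mult'[symmetric])
    also have "\<dots> \<le> ennreal (sqrt (2*d) * (indicator {0..1} t * t powr (-(1/2)) + indicator {1<..} t * exp (-t)))"
      by (intro ennreal_leI exp_div_mult_min_le d)
    finally show ?thesis
      by (simp add: ennreal_mult'')
  qed (simp add: eq)
qed

text \<open>This is the source of the 1/2-Hoelder regularity of the second derivative.\<close>
lemma nn_integral_E_shift_le:
  fixes d :: real assumes d: "d \<ge> 0"
  shows "(\<integral>\<^sup>+x. ennreal \<bar>E (x+d) - E x\<bar> \<partial>lborel) \<le> ennreal (3 * sqrt (2*d))"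
proof -
  have "AE x in lborel. x + d \<noteq> 0 \<and> x \<noteq> 0"
    using AE_lborel_singleton[of 0] AE_lborel_singleton[of "-d"] by eventually_elim auto
  then have "AE x in lborel. ennreal \<bar>E (x+d) - E x\<bar>
      \<le> (\<integral>\<^sup>+t. ennreal \<bar>E_kernel (x+d) t - E_kernel x t\<bar> \<partial>lborel)"
    by eventually_elim (auto intro!: ennreal_abs_E_diff_le)
  then have "(\<integral>\<^sup>+x. ennreal \<bar>E (x+d) - E x\<bar> \<partial>lborel)
      \<le> (\<integral>\<^sup>+x. (\<integral>\<^sup>+t. ennreal \<bar>E_kernel (x+d) t - E_kernel x t\<bar> \<partial>lborel) \<partial>lborel)"
    by (rule nn_integral_mono_AE)
  also have "\<dots> = (\<integral>\<^sup>+t. (\<integral>\<^sup>+x. ennreal \<bar>E_kernel (x+d) t - E_kernel x t\<bar> \<partial>lborel) \<partial>lborel)"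
    by (rule lborel_pair.Fubini'[symmetric]) (simp add: case_prod_unfold)
  also have "\<dots> \<le> (\<integral>\<^sup>+t. ennreal (sqrt (2*d)) *
      ennreal (indicator {0..1} t * t powr (-(1/2)) + indicator {1<..} t * exp (-t)) \<partial>lborel)"
    by (intro nn_integral_mono nn_integral_E_kernel_shift_le d)
  also have "\<dots> = ennreal (sqrt (2*d)) * (\<integral>\<^sup>+t. ennreal (indicator {0..1} t * t powr (-(1/2))) +
      ennreal (indicator {1<..} t * exp (-t)) \<partial>lborel)"
    by (subst nn_integral_cmult[symmetric]) (auto intro!: nn_integral_cong simp: indicator_def)
  also have "\<dots> = ennreal (sqrt (2*d)) * (2 + (\<integral>\<^sup>+t. ennreal (indicator {1<..} t * exp (-t)) \<partial>lborel))"
    by (simp add: nn_integral_add nn_integral_powr_minus_half)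
  also have "\<dots> \<le> ennreal (sqrt (2*d)) * (2 + 1)"
  proof -
    have "(\<integral>\<^sup>+t. ennreal (indicator {1<..} t * exp (-t)) \<partial>lborel)
        \<le> (\<integral>\<^sup>+t. ennreal (exp (-1*t)) * indicator {1..} t \<partial>lborel)"
      by (intro nn_integral_mono) (auto simp: indicator_def)
    also have "\<dots> \<le> 1"
      using nn_integral_exp_atLeast[of 1 1] by simp
    finally show ?thesis by (intro mult_left_mono add_left_mono) auto
  qed
  also have "\<dots> = ennreal (3 * sqrt (2*d))"
    by (simp add: ennreal_mult' mult.commute)
  finally show ?thesis .
qed

lemma
  assumes d: "d \<ge> 0"
  shows integrable_E_shift: "integrable lborel (\<lambda>s. \<bar>E (s + d) - E s\<bar>)"
    and integral_E_shift_le: "integral\<^sup>L lborel (\<lambda>s. \<bar>E (s + d) - E s\<bar>) \<le> 3 * sqrt (2*d)"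
proof -
  have "integrable lborel (\<lambda>s. E (d + 1 * s))"
    by (rule lborel_integrable_real_affine[OF integrable_E]) simp
  then show i: "integrable lborel (\<lambda>s. \<bar>E (s + d) - E s\<bar>)"
    using integrable_E by (simp add: add.commute)
  have "ennreal (integral\<^sup>L lborel (\<lambda>s. \<bar>E (s + d) - E s\<bar>)) =
      (\<integral>\<^sup>+s. ennreal \<bar>E (s + d) - E s\<bar> \<partial>lborel)"
    using i by (intro nn_integral_eq_integral[symmetric]) auto
  also have "\<dots> \<le> ennreal (3 * sqrt (2*d))"
    by (rule nn_integral_E_shift_le[OF d])
  finally show "integral\<^sup>L lborel (\<lambda>s. \<bar>E (s + d) - E s\<bar>) \<le> 3 * sqrt (2*d)"
    using d by (subst (asm) ennreal_le_iff) auto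
qed

lemma integrable_E_translate: "integrable lborel (\<lambda>\<eta>. E (t - \<eta>))"
  using lborel_integrable_real_affine[OF integrable_E, of "-1" t] by simp

lemma integral_E_translate: "integral\<^sup>L lborel (\<lambda>\<eta>. E (t - \<eta>)) = 1"
  using lborel_integral_real_affine[of "-1" E t] integral_E by simp

lemma integrable_E_exp_half_translate:
  "integrable lborel (\<lambda>\<eta>. E (t - \<eta>) * exp (\<bar>t - \<eta>\<bar>/2))"
  using lborel_integrable_real_affine[OF integrable_E_exp_half, of "-1" t] by simp

lemma integral_E_exp_half_translate_le:
  "integral\<^sup>L lborel (\<lambda>\<eta>. E (t - \<eta>) * exp (\<bar>t - \<eta>\<bar>/2)) \<le> 2"
  using lborel_integral_real_affine[of "-1" "\<lambda>x. E x * exp (\<bar>x\<bar>/2)" t] integral_E_exp_half_le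
  by simp

section \<open>Convolution with E on the half-line\<close>

definition conv_E :: "(real \<Rightarrow> real) \<Rightarrow> real \<Rightarrow> real" where
  "conv_E q t = (LINT \<eta>:{0..}|lborel. E (t - \<eta>) * q \<eta>)"

definition half_line_measurable :: "(real \<Rightarrow> real) \<Rightarrow> bool" where
  "half_line_measurable q \<longleftrightarrow> (\<lambda>\<eta>. indicator {0..} \<eta> * q \<eta>) \<in> borel_measurable borel"

lemma half_line_measurable_continuous_on:
  "continuous_on {0..} q \<Longrightarrow> half_line_measurable q"
  using borel_measurable_continuous_on_indicator[of "{0..}" q]
  by (simp add: half_line_measurable_def)

lemma half_line_measurable_const: "half_line_measurable (\<lambda>_. L)"
  by (simp add: half_line_measurable_continuous_on)

lemma half_line_measurable_diff:
  assumes "half_line_measurable q1" "half_line_measurable q2"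
  shows "half_line_measurable (\<lambda>\<eta>. q1 \<eta> - q2 \<eta>)"
proof -
  have "(\<lambda>\<eta>. indicator {0..} \<eta> * q1 \<eta> - indicator {0..} \<eta> * q2 \<eta>) \<in> borel_measurable borel"
    using assms unfolding half_line_measurable_def by (intro borel_measurable_diff)
  then show ?thesis
    unfolding half_line_measurable_def by (simp add: right_diff_distrib)
qed

lemma conv_E_cong: "(\<And>\<eta>. \<eta> \<ge> 0 \<Longrightarrow> q1 \<eta> = q2 \<eta>) \<Longrightarrow> conv_E q1 t = conv_E q2 t"
  unfolding conv_E_def by (intro set_lebesgue_integral_cong) auto

lemma conv_E_dominated:
  assumes q: "half_line_measurable q"
    and w: "integrable lborel (\<lambda>\<eta>. E (t - \<eta>) * w \<eta>)" "\<And>\<eta>. 0 \<le> w \<eta>"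
    and qw: "\<And>\<eta>. \<eta> \<ge> 0 \<Longrightarrow> \<bar>q \<eta>\<bar> \<le> w \<eta>"
  shows "set_integrable lborel {0..} (\<lambda>\<eta>. E (t - \<eta>) * q \<eta>)"
    and "\<bar>conv_E q t\<bar> \<le> integral\<^sup>L lborel (\<lambda>\<eta>. E (t - \<eta>) * w \<eta>)"
proof -
  have "(\<lambda>\<eta>. E (t - \<eta>) * (indicator {0..} \<eta> * q \<eta>)) \<in> borel_measurable borel"
    using q unfolding half_line_measurable_def by measurable
  then have m: "(\<lambda>\<eta>. indicator {0..} \<eta> * (E (t - \<eta>) * q \<eta>)) \<in> borel_measurable lborel"
    by (simp add: mult_ac)
  have b: "\<bar>indicator {0..} \<eta> * (E (t - \<eta>) * q \<eta>)\<bar> \<le> E (t - \<eta>) * w \<eta>" for \<eta>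
    using qw[of \<eta>] w(2)[of \<eta>] E_nonneg[of "t - \<eta>"]
    by (cases "\<eta> \<ge> 0") (auto simp: abs_mult intro: mult_left_mono)
  show "set_integrable lborel {0..} (\<lambda>\<eta>. E (t - \<eta>) * q \<eta>)"
    using abs_integral_le_dominating(1)[OF w(1) m b] by (simp add: set_integrable_def)
  show "\<bar>conv_E q t\<bar> \<le> integral\<^sup>L lborel (\<lambda>\<eta>. E (t - \<eta>) * w \<eta>)"
    using abs_integral_le_dominating(2)[OF w(1) m b] by (simp add: conv_E_def set_lebesgue_integral_def)
qed

lemma set_integrable_conv_E:
  assumes q: "half_line_measurable q" and B: "\<And>\<eta>. \<eta> \<ge> 0 \<Longrightarrow> \<bar>q \<eta>\<bar> \<le> B"
  shows "set_integrable lborel {0..} (\<lambda>\<eta>. E (t - \<eta>) * q \<eta>)"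
proof (rule conv_E_dominated(1)[OF q _ _ B])
  show "0 \<le> B" using B[of 0] by simp
  then show "integrable lborel (\<lambda>\<eta>. E (t - \<eta>) * B)"
    using integrable_E_translate by auto
qed

lemma conv_E_diff:
  assumes "half_line_measurable q1" "\<And>\<eta>. \<eta> \<ge> 0 \<Longrightarrow> \<bar>q1 \<eta>\<bar> \<le> B1"
    and "half_line_measurable q2" "\<And>\<eta>. \<eta> \<ge> 0 \<Longrightarrow> \<bar>q2 \<eta>\<bar> \<le> B2"
  shows "conv_E q1 t - conv_E q2 t = conv_E (\<lambda>\<eta>. q1 \<eta> - q2 \<eta>) t"
  unfolding conv_E_def
  using set_integral_diff(2)[OF set_integrable_conv_E[OF assms(1,2)] set_integrable_conv_E[OF assms(3,4)]]
  by (simp add: right_diff_distrib)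

text \<open>Here the exponential moment int E(x) e^{|x|/2} dx \<le> 2 of E is used.\<close>
lemma abs_conv_E_exp_half_le:
  assumes q: "half_line_measurable q"
    and B: "\<And>\<eta>. \<eta> \<ge> 0 \<Longrightarrow> \<bar>q \<eta>\<bar> \<le> B * exp (-\<eta>/2)" and t: "t \<ge> 0"
  shows "\<bar>conv_E q t\<bar> \<le> 2 * B * exp (-t/2)"
proof -
  have "B \<ge> 0" using B[of 0] by simp
  let ?w = "\<lambda>\<eta>. B * exp (-t/2) * exp (\<bar>t - \<eta>\<bar>/2)"
  have qw: "\<bar>q \<eta>\<bar> \<le> ?w \<eta>" if "\<eta> \<ge> 0" for \<eta>
  proof -
    have "-\<eta>/2 \<le> -t/2 + \<bar>t - \<eta>\<bar>/2"
      using abs_ge_self[of "t - \<eta>"] by (simp add: field_simps)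
    then have "exp (-\<eta>/2) \<le> exp (-t/2) * exp (\<bar>t - \<eta>\<bar>/2)"
      by (simp add: exp_add[symmetric])
    then show ?thesis
      using B[OF that] \<open>B \<ge> 0\<close> by (metis mult_left_mono order_trans mult.assoc)
  qed
  have "integrable lborel (\<lambda>\<eta>. B * exp (-t/2) * (E (t - \<eta>) * exp (\<bar>t - \<eta>\<bar>/2)))"
    using integrable_E_exp_half_translate[of t] by simp
  then have "integrable lborel (\<lambda>\<eta>. E (t - \<eta>) * ?w \<eta>)"
    by (simp add: mult_ac)
  then have "\<bar>conv_E q t\<bar> \<le> integral\<^sup>L lborel (\<lambda>\<eta>. E (t - \<eta>) * ?w \<eta>)"
    using \<open>B \<ge> 0\<close> by (intro conv_E_dominated(2)[OF q _ _ qw]) auto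
  also have "\<dots> = integral\<^sup>L lborel (\<lambda>\<eta>. B * exp (-t/2) * (E (t - \<eta>) * exp (\<bar>t - \<eta>\<bar>/2)))"
    by (intro Bochner_Integration.integral_cong) (simp_all add: mult_ac)
  also have "\<dots> = B * exp (-t/2) * integral\<^sup>L lborel (\<lambda>\<eta>. E (t - \<eta>) * exp (\<bar>t - \<eta>\<bar>/2))"
    by simp
  also have "\<dots> \<le> B * exp (-t/2) * 2"
    using integral_E_exp_half_translate_le \<open>B \<ge> 0\<close> by (intro mult_left_mono) auto
  finally show ?thesis by simp
qed

lemma abs_one_minus_conv_E_one_le:
  assumes t: "t \<ge> 0"
  shows "\<bar>1 - conv_E (\<lambda>_. 1) t\<bar> \<le> 2 * exp (-t/2)"
proof -
  let ?f = "\<lambda>\<eta>. indicator {..<0} \<eta> * E (t - \<eta>)"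
  have "1 - conv_E (\<lambda>_. 1) t = integral\<^sup>L lborel (\<lambda>\<eta>. E (t - \<eta>)) -
      integral\<^sup>L lborel (\<lambda>\<eta>. indicator {0..} \<eta> * E (t - \<eta>))"
    unfolding conv_E_def set_lebesgue_integral_def integral_E_translate by simp
  also have "\<dots> = integral\<^sup>L lborel (\<lambda>\<eta>. E (t - \<eta>) - indicator {0..} \<eta> * E (t - \<eta>))"
    using set_integrable_conv_E[OF half_line_measurable_const, of 1 1 t]
    by (intro Bochner_Integration.integral_diff[symmetric] integrable_E_translate)
      (simp_all add: set_integrable_def)
  also have "\<dots> = integral\<^sup>L lborel ?f"
    by (intro Bochner_Integration.integral_cong) (auto simp: indicator_def)
  finally have eq: "1 - conv_E (\<lambda>_. 1) t = integral\<^sup>L lborel ?f" .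
  have b: "\<bar>?f \<eta>\<bar> \<le> exp (-t/2) * (E (t - \<eta>) * exp (\<bar>t - \<eta>\<bar>/2))" for \<eta>
  proof (cases "\<eta> < 0")
    case True
    then have "1 \<le> exp (-t/2) * exp (\<bar>t - \<eta>\<bar>/2)"
      using t by (simp add: exp_add[symmetric])
    then have "E (t - \<eta>) * 1 \<le> E (t - \<eta>) * (exp (-t/2) * exp (\<bar>t - \<eta>\<bar>/2))"
      using E_nonneg by (intro mult_left_mono) auto
    then show ?thesis
      using True E_nonneg[of "t - \<eta>"] by (simp add: mult_ac)
  qed (simp add: E_nonneg)
  have "\<bar>1 - conv_E (\<lambda>_. 1) t\<bar> \<le> integral\<^sup>L lborel (\<lambda>\<eta>. exp (-t/2) * (E (t - \<eta>) * exp (\<bar>t - \<eta>\<bar>/2)))"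
    unfolding eq using integrable_E_exp_half_translate
    by (intro abs_integral_le_dominating(2)[OF _ _ b]) auto
  also have "\<dots> \<le> exp (-t/2) * 2"
    using integral_E_exp_half_translate_le by (simp add: mult_left_mono)
  finally show ?thesis by simp
qed

text \<open>Compare q with the constant L: since int E = 1, conv_E reproduces constants up to
  a boundary term of size e^{-t/2}.\<close>
lemma abs_minus_conv_E_le:
  assumes q: "half_line_measurable q"
    and L: "\<And>\<eta>. \<eta> \<ge> 0 \<Longrightarrow> \<bar>q \<eta> - L\<bar> \<le> B * exp (-\<eta>/2)" and t: "t \<ge> 0"
  shows "\<bar>q t - conv_E q t\<bar> \<le> (3*B + 2*\<bar>L\<bar>) * exp (-t/2)"
proof -
  have "B \<ge> 0" using L[of 0] by simp
  have qb: "\<bar>q \<eta>\<bar> \<le> \<bar>L\<bar> + B" if "\<eta> \<ge> 0" for \<eta>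
  proof -
    have "B * exp (-\<eta>/2) \<le> B" using \<open>B \<ge> 0\<close> that by (simp add: mult_left_le)
    then show ?thesis using L[OF that] by linarith
  qed
  have "conv_E q t - conv_E (\<lambda>_. L) t = conv_E (\<lambda>\<eta>. q \<eta> - L) t"
    by (rule conv_E_diff[OF q qb half_line_measurable_const]) auto
  moreover have "conv_E (\<lambda>_. L) t = L * conv_E (\<lambda>_. 1) t"
    by (simp add: conv_E_def mult_ac)
  ultimately have "q t - conv_E q t = (q t - L) - conv_E (\<lambda>\<eta>. q \<eta> - L) t + L * (1 - conv_E (\<lambda>_. 1) t)"
    by (simp add: algebra_simps)
  moreover have "\<bar>conv_E (\<lambda>\<eta>. q \<eta> - L) t\<bar> \<le> 2 * B * exp (-t/2)"
    by (rule abs_conv_E_exp_half_le[OF half_line_measurable_diff[OF q half_line_measurable_const] L t])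
  moreover have "\<bar>L * (1 - conv_E (\<lambda>_. 1) t)\<bar> \<le> \<bar>L\<bar> * (2 * exp (-t/2))"
    unfolding abs_mult by (intro mult_left_mono abs_one_minus_conv_E_one_le t) auto
  ultimately have "\<bar>q t - conv_E q t\<bar> \<le> B * exp (-t/2) + 2 * B * exp (-t/2) + \<bar>L\<bar> * (2 * exp (-t/2))"
    using L[OF t] by linarith
  then show ?thesis by (simp add: algebra_simps)
qed

lemma abs_conv_E_shift_le:
  assumes q: "half_line_measurable q" and B: "\<And>\<eta>. \<eta> \<ge> 0 \<Longrightarrow> \<bar>q \<eta>\<bar> \<le> B" and d: "d \<ge> 0"
  shows "\<bar>conv_E q (x + d) - conv_E q x\<bar> \<le> B * (3 * sqrt 2) * sqrt d"
proof -
  have "B \<ge> 0" using B[of 0] by simp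
  let ?f = "\<lambda>\<eta>. indicator {0..} \<eta> * ((E (x + d - \<eta>) - E (x - \<eta>)) * q \<eta>)"
  have i: "integrable lborel (\<lambda>\<eta>. indicator {0..} \<eta> * (E (s - \<eta>) * q \<eta>))" for s
    using set_integrable_conv_E[OF q B] by (simp add: set_integrable_def)
  have eq: "conv_E q (x + d) - conv_E q x = integral\<^sup>L lborel ?f"
    unfolding conv_E_def set_lebesgue_integral_def
    using i[of "x + d"] i[of x]
    by (subst Bochner_Integration.integral_diff[symmetric]) (auto simp: algebra_simps)
  have shift: "integrable lborel (\<lambda>\<eta>. \<bar>E ((x + (-1) * \<eta>) + d) - E (x + (-1) * \<eta>)\<bar>)"
    "integral\<^sup>L lborel (\<lambda>\<eta>. \<bar>E ((x + (-1) * \<eta>) + d) - E (x + (-1) * \<eta>)\<bar>) =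
     integral\<^sup>L lborel (\<lambda>s. \<bar>E (s + d) - E s\<bar>)"
    using lborel_integrable_real_affine[OF integrable_E_shift[OF d], of "-1" x]
      lborel_integral_real_affine[of "-1" "\<lambda>s. \<bar>E (s + d) - E s\<bar>" x] by simp_all
  have "(\<lambda>\<eta>. (E (x + d - \<eta>) - E (x - \<eta>)) * (indicator {0..} \<eta> * q \<eta>)) \<in> borel_measurable borel"
    using q unfolding half_line_measurable_def by measurable
  then have m: "?f \<in> borel_measurable lborel"
    by (simp add: mult_ac)
  have b: "\<bar>?f \<eta>\<bar> \<le> B * \<bar>E (x + d - \<eta>) - E (x - \<eta>)\<bar>" for \<eta>
    using B[of \<eta>] \<open>B \<ge> 0\<close> by (cases "\<eta> \<ge> 0") (auto simp: abs_mult mult.commute intro: mult_right_mono)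
  have "\<bar>conv_E q (x + d) - conv_E q x\<bar> \<le> integral\<^sup>L lborel (\<lambda>\<eta>. B * \<bar>E (x + d - \<eta>) - E (x - \<eta>)\<bar>)"
    unfolding eq using shift(1) by (intro abs_integral_le_dominating(2)[OF _ m b]) (simp add: algebra_simps)
  also have "\<dots> = B * integral\<^sup>L lborel (\<lambda>s. \<bar>E (s + d) - E s\<bar>)"
    using shift(2) by (simp add: algebra_simps)
  also have "\<dots> \<le> B * (3 * sqrt (2*d))"
    using integral_E_shift_le[OF d] \<open>B \<ge> 0\<close> by (intro mult_left_mono) auto
  finally show ?thesis by (simp add: real_sqrt_mult)
qed

lemma conv_E_holder:
  assumes "half_line_measurable q" "\<And>\<eta>. \<eta> \<ge> 0 \<Longrightarrow> \<bar>q \<eta>\<bar> \<le> B"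
  shows "\<bar>conv_E q x - conv_E q y\<bar> \<le> B * (3 * sqrt 2) * sqrt \<bar>x - y\<bar>"
proof (cases "x \<le> y")
  case True
  then show ?thesis
    using abs_conv_E_shift_le[OF assms, of "y - x" x] by (simp add: abs_minus_commute)
next
  case False
  then show ?thesis
    using abs_conv_E_shift_le[OF assms, of "x - y" y] by simp
qed

lemma continuous_on_conv_E:
  assumes "half_line_measurable q" "\<And>\<eta>. \<eta> \<ge> 0 \<Longrightarrow> \<bar>q \<eta>\<bar> \<le> B"
  shows "continuous_on S (conv_E q)"
  by (rule holder_half_imp_continuous_on[where C="B * (3 * sqrt 2)"]) (rule conv_E_holder[OF assms])

section \<open>The bounded solution of F' = c F + h\<close>

definition decays_exp_half :: "(real \<Rightarrow> real) \<Rightarrow> real \<Rightarrow> bool" where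
  "decays_exp_half h H \<longleftrightarrow> continuous_on {0..} h \<and> (\<forall>t\<ge>0. \<bar>h t\<bar> \<le> H * exp (-t/2))"

definition bounded_solution :: "real \<Rightarrow> (real \<Rightarrow> real) \<Rightarrow> real \<Rightarrow> real" where
  "bounded_solution c h y = - exp (c*y) * (LINT t:{y<..}|lborel. exp (-c*t) * h t)"

lemma decays_exp_half_nonneg:
  assumes "decays_exp_half h H" shows "H \<ge> 0"
proof -
  have "\<bar>h 0\<bar> \<le> H * exp (-0/2)" using assms unfolding decays_exp_half_def by blast
  then show ?thesis by simp
qed

lemma decays_exp_half_abs_le:
  assumes "decays_exp_half h H" "y \<ge> 0" shows "\<bar>h y\<bar> \<le> H"
proof -
  have "\<bar>h y\<bar> \<le> H * exp (-y/2)" using assms unfolding decays_exp_half_def by blast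
  also have "\<dots> \<le> H" using assms decays_exp_half_nonneg[OF assms(1)] by (simp add: mult_left_le)
  finally show ?thesis .
qed

lemma
  assumes h: "decays_exp_half h H" and y: "y \<ge> 0" and c: "c \<ge> 0"
    and S: "S \<in> sets borel" "S \<subseteq> {y..}"
  shows set_integrable_exp_mult: "set_integrable lborel S (\<lambda>t. exp (-c*t) * h t)"
    and abs_set_integral_exp_mult_le:
      "\<bar>LINT t:S|lborel. exp (-c*t) * h t\<bar> \<le> exp (-c*y) * (2 * H * exp (-y/2))"
proof -
  have H: "H \<ge> 0" by (rule decays_exp_half_nonneg[OF h])
  have "(\<lambda>t. indicator S t * exp (-c*t)) \<in> borel_measurable borel"
    using S by measurable
  moreover have "(\<lambda>t. indicator {0..} t * h t) \<in> borel_measurable borel"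
    using h half_line_measurable_continuous_on[of h]
    unfolding decays_exp_half_def half_line_measurable_def by blast
  ultimately have "(\<lambda>t. indicator S t * exp (-c*t) * (indicator {0..} t * h t)) \<in> borel_measurable borel"
    by (rule borel_measurable_times)
  moreover have "(\<lambda>t. indicator S t * (exp (-c*t) * h t)) =
      (\<lambda>t. indicator S t * exp (-c*t) * (indicator {0..} t * h t))"
    using S y by (auto simp: indicator_def fun_eq_iff)
  ultimately have m: "(\<lambda>t. indicator S t * (exp (-c*t) * h t)) \<in> borel_measurable lborel"
    by simp
  have gi: "integrable lborel (\<lambda>t. exp (-c*y) * H * (indicator {y..} t * exp (-(1/2)*t)))"
    using set_integrable_exp_atLeast[of "1/2" y] unfolding set_integrable_def by simp
  have b: "\<bar>indicator S t * (exp (-c*t) * h t)\<bar> \<le> exp (-c*y) * H * (indicator {y..} t * exp (-(1/2)*t))" for t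
  proof (cases "t \<in> S")
    case True
    then have t: "t \<ge> y" using S by auto
    have "\<bar>h t\<bar> \<le> H * exp (-t/2)" using h t y unfolding decays_exp_half_def by auto
    moreover have "exp (-c*t) \<le> exp (-c*y)" using t c by (simp add: mult_left_mono)
    ultimately have "exp (-c*t) * \<bar>h t\<bar> \<le> exp (-c*y) * (H * exp (-t/2))"
      by (intro mult_mono) auto
    then show ?thesis using True t by (simp add: abs_mult mult_ac)
  qed (use H in simp)
  show "set_integrable lborel S (\<lambda>t. exp (-c*t) * h t)"
    unfolding set_integrable_def using abs_integral_le_dominating(1)[OF gi m b] by simp
  have "\<bar>LINT t:S|lborel. exp (-c*t) * h t\<bar>
      \<le> integral\<^sup>L lborel (\<lambda>t. exp (-c*y) * H * (indicator {y..} t * exp (-(1/2)*t)))"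
    unfolding set_lebesgue_integral_def using abs_integral_le_dominating(2)[OF gi m b] by simp
  also have "\<dots> = exp (-c*y) * H * (LINT t:{y..}|lborel. exp (-(1/2)*t))"
    unfolding set_lebesgue_integral_def by simp
  also have "\<dots> = exp (-c*y) * (2 * H * exp (-y/2))"
    using set_integral_exp_atLeast[of "1/2" y] by simp
  finally show "\<bar>LINT t:S|lborel. exp (-c*t) * h t\<bar> \<le> exp (-c*y) * (2 * H * exp (-y/2))" .
qed

lemma abs_bounded_solution_le:
  assumes "decays_exp_half h H" "y \<ge> 0" "c \<ge> 0"
  shows "\<bar>bounded_solution c h y\<bar> \<le> 2 * H * exp (-y/2)"
proof -
  have "exp (c*y) * \<bar>LINT t:{y<..}|lborel. exp (-c*t) * h t\<bar>
      \<le> exp (c*y) * (exp (-c*y) * (2 * H * exp (-y/2)))"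
    by (intro mult_left_mono abs_set_integral_exp_mult_le[OF assms]) auto
  also have "\<dots> = 2 * H * exp (-y/2)" by (simp add: exp_minus field_simps)
  finally show ?thesis unfolding bounded_solution_def by (simp add: abs_mult)
qed

lemma abs_bounded_solution_le_const:
  assumes "decays_exp_half h H" "y \<ge> 0" "c \<ge> 0"
  shows "\<bar>bounded_solution c h y\<bar> \<le> 2 * H"
proof -
  have "\<bar>bounded_solution c h y\<bar> \<le> 2 * H * exp (-y/2)" by (rule abs_bounded_solution_le[OF assms])
  also have "\<dots> \<le> 2 * H" using assms decays_exp_half_nonneg[OF assms(1)] by (simp add: mult_left_le)
  finally show ?thesis .
qed

lemma abs_bounded_solution_derivative_le:
  assumes h: "decays_exp_half h H" and y: "y \<ge> 0" and c: "c \<ge> 0"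
  shows "\<bar>c * bounded_solution c h y + h y\<bar> \<le> c * (2*H) + H"
proof -
  have "\<bar>c * bounded_solution c h y\<bar> \<le> c * (2*H)"
    using abs_bounded_solution_le_const[OF h y c] c by (simp add: abs_mult mult_left_mono)
  then show ?thesis using decays_exp_half_abs_le[OF h y] by linarith
qed

lemma bounded_solution_has_derivative:
  assumes h: "decays_exp_half h H" and y: "y \<ge> 0" and c: "c \<ge> 0"
  shows "(bounded_solution c h has_real_derivative (c * bounded_solution c h y + h y)) (at y within {0..})"
proof -
  define C0 where "C0 = (LINT t:{0..}|lborel. exp (-c*t) * h t)"
  define I where "I = (\<lambda>x. integral {0..x} (\<lambda>t. exp (-c*t) * h t))"
  have split: "bounded_solution c h x = - exp (c*x) * (C0 - I x)" if x: "x \<ge> 0" for x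
  proof -
    have i: "set_integrable lborel {0..x} (\<lambda>t. exp (-c*t) * h t)"
        "set_integrable lborel {x<..} (\<lambda>t. exp (-c*t) * h t)"
      by (rule set_integrable_exp_mult[OF h order_refl c]; auto)
        (rule set_integrable_exp_mult[OF h x c]; auto)
    have "{0..} = {0..x} \<union> {x<..}" using x by auto
    then have "C0 = (LINT t:{0..x} \<union> {x<..}|lborel. exp (-c*t) * h t)"
      unfolding C0_def by simp
    also have "\<dots> = (LINT t:{0..x}|lborel. exp (-c*t) * h t) + (LINT t:{x<..}|lborel. exp (-c*t) * h t)"
      by (rule set_integral_Un[OF _ i]) auto
    finally have "C0 = \<dots>" .
    then show ?thesis
      unfolding bounded_solution_def I_def using set_borel_integral_eq_integral(2)[OF i(1)] by simp
  qed
  have "continuous_on {0..} (\<lambda>t. exp (-c*t) * h t)"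
    using h unfolding decays_exp_half_def by (intro continuous_intros) auto
  then have "(I has_real_derivative exp (-c*y) * h y) (at y within {0..})"
    unfolding I_def by (rule has_real_derivative_integral_atLeast[OF _ y])
  then have "((\<lambda>x. - exp (c*x) * (C0 - I x)) has_real_derivative
      (- (c * exp (c*y))) * (C0 - I y) + (0 - exp (-c*y) * h y) * (- exp (c*y))) (at y within {0..})"
    by (auto intro!: derivative_eq_intros)
  moreover have "(- (c * exp (c*y))) * (C0 - I y) + (0 - exp (-c*y) * h y) * (- exp (c*y))
      = c * bounded_solution c h y + h y"
    unfolding split[OF y] by (simp add: algebra_simps flip: exp_add)
  ultimately have "((\<lambda>x. - exp (c*x) * (C0 - I x)) has_real_derivative
      c * bounded_solution c h y + h y) (at y within {0..})"
    by simp
  then show ?thesis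
    by (rule has_field_derivative_transform_within[where d=1]) (use y split in auto)
qed

lemma continuous_on_bounded_solution:
  assumes "decays_exp_half h H" "c \<ge> 0"
  shows "continuous_on {0..} (bounded_solution c h)"
  using bounded_solution_has_derivative[OF assms(1) _ assms(2)]
  by (intro continuous_on_if_has_derivative_within) auto

lemma
  assumes h: "decays_exp_half h H" and y: "y \<ge> 0" and c: "c \<ge> 0"
    and S: "S \<in> sets borel" "S \<subseteq> {y..}"
  shows set_integrable_bounded_solution: "set_integrable lborel S (bounded_solution c h)"
    and abs_set_integral_bounded_solution_le:
      "\<bar>LINT t:S|lborel. bounded_solution c h t\<bar> \<le> 4 * H * exp (-y/2)"
proof -
  have H: "H \<ge> 0" by (rule decays_exp_half_nonneg[OF h])
  have "(indicator S :: real \<Rightarrow> real) \<in> borel_measurable borel"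
    using S by simp
  then have "(\<lambda>t. indicator S t * (indicator {0..} t * bounded_solution c h t)) \<in> borel_measurable borel"
    using half_line_measurable_continuous_on[OF continuous_on_bounded_solution[OF h c]]
    unfolding half_line_measurable_def by (rule borel_measurable_times)
  moreover have "(\<lambda>t. indicator S t * bounded_solution c h t) =
      (\<lambda>t. indicator S t * (indicator {0..} t * bounded_solution c h t))"
    using S y by (auto simp: indicator_def fun_eq_iff)
  ultimately have m: "(\<lambda>t. indicator S t * bounded_solution c h t) \<in> borel_measurable lborel"
    by simp
  have gi: "integrable lborel (\<lambda>t. 2 * H * (indicator {y..} t * exp (-(1/2)*t)))"
    using set_integrable_exp_atLeast[of "1/2" y] unfolding set_integrable_def by simp
  have b: "\<bar>indicator S t * bounded_solution c h t\<bar> \<le> 2 * H * (indicator {y..} t * exp (-(1/2)*t))" for t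
  proof (cases "t \<in> S")
    case True
    then have "t \<ge> y" using S by auto
    then show ?thesis using True abs_bounded_solution_le[OF h _ c, of t] y by (simp add: mult_ac)
  qed (use H in simp)
  show "set_integrable lborel S (bounded_solution c h)"
    unfolding set_integrable_def using abs_integral_le_dominating(1)[OF gi m b] by simp
  have "\<bar>LINT t:S|lborel. bounded_solution c h t\<bar>
      \<le> integral\<^sup>L lborel (\<lambda>t. 2 * H * (indicator {y..} t * exp (-(1/2)*t)))"
    unfolding set_lebesgue_integral_def using abs_integral_le_dominating(2)[OF gi m b] by simp
  also have "\<dots> = 2 * H * (LINT t:{y..}|lborel. exp (-(1/2)*t))"
    unfolding set_lebesgue_integral_def by simp
  also have "\<dots> = 4 * H * exp (-y/2)"
    using set_integral_exp_atLeast[of "1/2" y] by simp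
  finally show "\<bar>LINT t:S|lborel. bounded_solution c h t\<bar> \<le> 4 * H * exp (-y/2)" .
qed

lemma bounded_solution_diff:
  assumes h1: "decays_exp_half h1 H1" and h2: "decays_exp_half h2 H2" and y: "y \<ge> 0" and c: "c \<ge> 0"
  shows "bounded_solution c h1 y - bounded_solution c h2 y = bounded_solution c (\<lambda>t. h1 t - h2 t) y"
proof -
  have "set_integrable lborel {y<..} (\<lambda>t. exp (-c*t) * h1 t)"
    "set_integrable lborel {y<..} (\<lambda>t. exp (-c*t) * h2 t)"
    by (rule set_integrable_exp_mult[OF h1 y c]; auto) (rule set_integrable_exp_mult[OF h2 y c]; auto)
  then have "(LINT t:{y<..}|lborel. exp (-c*t) * h1 t) - (LINT t:{y<..}|lborel. exp (-c*t) * h2 t) =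
      (LINT t:{y<..}|lborel. exp (-c*t) * (h1 t - h2 t))"
    unfolding right_diff_distrib by (rule set_integral_diff(2)[symmetric])
  then show ?thesis
    unfolding bounded_solution_def right_diff_distrib[symmetric] by simp
qed

lemma set_integral_bounded_solution_diff:
  assumes h1: "decays_exp_half h1 H1" and h2: "decays_exp_half h2 H2" and c: "c \<ge> 0" and y: "y \<ge> 0"
    and S: "S \<in> sets borel" "S \<subseteq> {y..}"
  shows "(LINT t:S|lborel. bounded_solution c h1 t) - (LINT t:S|lborel. bounded_solution c h2 t) =
    (LINT t:S|lborel. bounded_solution c (\<lambda>t. h1 t - h2 t) t)"
proof -
  have "(LINT t:S|lborel. bounded_solution c h1 t) - (LINT t:S|lborel. bounded_solution c h2 t) =
      (LINT t:S|lborel. bounded_solution c h1 t - bounded_solution c h2 t)"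
    by (rule set_integral_diff(2)[symmetric, OF set_integrable_bounded_solution[OF h1 y c S]
          set_integrable_bounded_solution[OF h2 y c S]])
  also have "\<dots> = (LINT t:S|lborel. bounded_solution c (\<lambda>t. h1 t - h2 t) t)"
  proof (rule set_lebesgue_integral_cong)
    show "S \<in> sets lborel" using S by simp
    show "\<forall>t. t \<in> S \<longrightarrow> bounded_solution c h1 t - bounded_solution c h2 t =
        bounded_solution c (\<lambda>t. h1 t - h2 t) t"
      using S y bounded_solution_diff[OF h1 h2 _ c] by auto
  qed
  finally show ?thesis .
qed

lemma set_integral_atLeast_derivative:
  fixes \<phi> k :: "real \<Rightarrow> real"
  assumes cont: "continuous_on {y..} \<phi>" and deriv: "\<And>x. x > y \<Longrightarrow> (\<phi> has_real_derivative k x) (at x)"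
    and int: "set_integrable lborel {y..} k" and lim: "(\<phi> \<longlongrightarrow> 0) at_top"
  shows "(LINT t:{y..}|lborel. k t) = - \<phi> y"
proof -
  have fin: "(LINT t:{y..Y}|lborel. k t) = \<phi> Y - \<phi> y" if Y: "Y \<ge> y" for Y
  proof -
    have "(k has_integral (\<phi> Y - \<phi> y)) {y..Y}"
    proof (rule fundamental_theorem_of_calculus_interior[OF Y])
      show "continuous_on {y..Y} \<phi>" by (rule continuous_on_subset[OF cont]) auto
      fix x assume "x \<in> {y<..<Y}"
      then show "(\<phi> has_vector_derivative k x) (at x)"
        using deriv has_real_derivative_iff_has_vector_derivative by auto
    qed
    moreover have "set_integrable lborel {y..Y} k"
      by (rule set_integrable_subset[OF int]) auto
    ultimately show ?thesis using set_borel_integral_eq_integral(2) by (metis integral_unique)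
  qed
  have "((\<lambda>Y. LINT t:{y..Y}|lborel. k t) \<longlongrightarrow> (LINT t:{y..}|lborel. k t)) at_top"
    by (rule tendsto_set_lebesgue_integral_at_top[OF _ int]) auto
  moreover have "((\<lambda>Y. LINT t:{y..Y}|lborel. k t) \<longlongrightarrow> 0 - \<phi> y) at_top"
  proof (rule Lim_transform_eventually)
    show "((\<lambda>Y. \<phi> Y - \<phi> y) \<longlongrightarrow> 0 - \<phi> y) at_top" by (intro tendsto_intros lim)
    show "\<forall>\<^sub>F Y in at_top. \<phi> Y - \<phi> y = (LINT t:{y..Y}|lborel. k t)"
      using eventually_ge_at_top[of y] by eventually_elim (metis fin)
  qed
  ultimately show ?thesis
    using tendsto_unique[OF trivial_limit_at_top_linorder] by fastforce
qed

text \<open>Apply the previous lemma to e^{-cx} G x, which vanishes at infinity since c > 0.\<close>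
lemma bounded_solution_unique:
  assumes h: "decays_exp_half h H" and c: "c > 0" and y: "y \<ge> 0"
    and cont: "continuous_on {0..} G" and bdd: "\<And>x. x \<ge> 0 \<Longrightarrow> \<bar>G x\<bar> \<le> B"
    and deriv: "\<And>x. x > 0 \<Longrightarrow> (G has_real_derivative c * G x + h x) (at x)"
  shows "G y = bounded_solution c h y"
proof -
  define \<phi> where "\<phi> x = exp (-c*x) * G x" for x
  have "(LINT t:{y..}|lborel. exp (-c*t) * h t) = - \<phi> y"
  proof (rule set_integral_atLeast_derivative)
    show "continuous_on {y..} \<phi>"
      unfolding \<phi>_def using y by (intro continuous_intros continuous_on_subset[OF cont]) auto
    show "(\<phi> has_real_derivative exp (-c*x) * h x) (at x)" if "x > y" for x
    proof -
      have "(\<phi> has_real_derivative (- c * exp (-c*x)) * G x + exp (-c*x) * (c * G x + h x)) (at x)"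
        unfolding \<phi>_def[abs_def] using deriv[of x] that y by (auto intro!: derivative_eq_intros)
      then show ?thesis by (simp add: algebra_simps)
    qed
    show "set_integrable lborel {y..} (\<lambda>t. exp (-c*t) * h t)"
      using c y by (intro set_integrable_exp_mult[OF h]) auto
    have "((\<lambda>Y. B * exp (-c*Y)) \<longlongrightarrow> 0) at_top"
      using c by real_asymp
    moreover have "\<forall>\<^sub>F Y in at_top. norm (\<phi> Y) \<le> B * exp (-c*Y)"
      using eventually_ge_at_top[of "0::real"]
      by eventually_elim (use bdd in \<open>auto simp: \<phi>_def abs_mult mult.commute intro: mult_left_mono\<close>)
    ultimately show "(\<phi> \<longlongrightarrow> 0) at_top"
      by (rule Lim_null_comparison[rotated])
  qed
  moreover have "(LINT t:{y..}|lborel. exp (-c*t) * h t) = (LINT t:{y<..}|lborel. exp (-c*t) * h t)"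
    by (rule set_integral_discrete_difference[where X="{y}"]) auto
  ultimately show ?thesis
    unfolding bounded_solution_def \<phi>_def by (simp add: exp_minus field_simps)
qed

section \<open>The quartic nonlinearity\<close>

lemma abs_mult_le_square:
  fixes x y R :: real assumes "\<bar>x\<bar> \<le> R" "\<bar>y\<bar> \<le> R"
  shows "\<bar>x * y\<bar> \<le> R^2"
proof -
  have "0 \<le> R" using assms(1) abs_ge_zero order_trans by blast
  then show ?thesis using mult_mono[OF assms] by (simp add: abs_mult power2_eq_square)
qed

lemma abs_mult3_le_cube:
  fixes x y z R :: real assumes "\<bar>x\<bar> \<le> R" "\<bar>y\<bar> \<le> R" "\<bar>z\<bar> \<le> R"
  shows "\<bar>x * y * z\<bar> \<le> R^3"
  using mult_mono[OF abs_mult_le_square[OF assms(1,2)] assms(3)]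
  by (simp add: abs_mult power3_eq_cube power2_eq_square)

definition quartic_quotient :: "real \<Rightarrow> real \<Rightarrow> real" where
  "quartic_quotient a b = a^3 + a*a*b + a*b*b + b^3"

lemma pow4_diff_eq: "a^4 - b^4 = (a - b) * quartic_quotient a b"
  unfolding quartic_quotient_def by algebra

lemma abs_quartic_quotient_le:
  assumes a: "\<bar>a\<bar> \<le> R" and b: "\<bar>b\<bar> \<le> R"
  shows "\<bar>quartic_quotient a b\<bar> \<le> 4 * R^3"
proof -
  have "\<bar>quartic_quotient a b\<bar> \<le> \<bar>a*a*a\<bar> + \<bar>a*a*b\<bar> + \<bar>a*b*b\<bar> + \<bar>b*b*b\<bar>"
    unfolding quartic_quotient_def power3_eq_cube by linarith
  then show ?thesis
    using abs_mult3_le_cube[OF a a a] abs_mult3_le_cube[OF a a b]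
      abs_mult3_le_cube[OF a b b] abs_mult3_le_cube[OF b b b] by linarith
qed

lemma abs_quartic_quotient_diff_le:
  assumes "\<bar>a\<bar> \<le> R" "\<bar>b\<bar> \<le> R" "\<bar>\<alpha>\<bar> \<le> R" "\<bar>\<beta>\<bar> \<le> R"
  shows "\<bar>quartic_quotient a \<alpha> - quartic_quotient b \<beta>\<bar> \<le> 6 * R^2 * (\<bar>a - b\<bar> + \<bar>\<alpha> - \<beta>\<bar>)"
proof -
  define P where "P x y z = x*x + x*y + y*y + z*x + z*y + z*z" for x y z :: real
  have P: "\<bar>P x y z\<bar> \<le> 6 * R^2" if "\<bar>x\<bar> \<le> R" "\<bar>y\<bar> \<le> R" "\<bar>z\<bar> \<le> R" for x y z
  proof -
    have "\<bar>P x y z\<bar> \<le> \<bar>x*x\<bar> + \<bar>x*y\<bar> + \<bar>y*y\<bar> + \<bar>z*x\<bar> + \<bar>z*y\<bar> + \<bar>z*z\<bar>"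
      unfolding P_def by linarith
    then show ?thesis
      using that by (smt (verit) abs_mult_le_square)
  qed
  have "quartic_quotient a \<alpha> - quartic_quotient b \<beta> = (a - b) * P a b \<alpha> + (\<alpha> - \<beta>) * P \<alpha> \<beta> b"
    unfolding quartic_quotient_def P_def by algebra
  moreover have "\<bar>(a - b) * P a b \<alpha>\<bar> \<le> \<bar>a - b\<bar> * (6 * R^2)"
    unfolding abs_mult using P assms by (intro mult_left_mono) auto
  moreover have "\<bar>(\<alpha> - \<beta>) * P \<alpha> \<beta> b\<bar> \<le> \<bar>\<alpha> - \<beta>\<bar> * (6 * R^2)"
    unfolding abs_mult using P assms by (intro mult_left_mono) auto
  ultimately show ?thesis by (simp add: algebra_simps)
qed

lemma abs_pow4_diff_le:
  fixes a b R :: real assumes "\<bar>a\<bar> \<le> R" "\<bar>b\<bar> \<le> R"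
  shows "\<bar>a^4 - b^4\<bar> \<le> 4 * R^3 * \<bar>a - b\<bar>"
  unfolding pow4_diff_eq abs_mult
  using mult_left_mono[OF abs_quartic_quotient_le[OF assms], of "\<bar>a - b\<bar>"] by (simp add: mult_ac)

lemma abs_pow4_second_diff_le:
  fixes a b \<alpha> \<beta> R :: real
  assumes "\<bar>a\<bar> \<le> R" "\<bar>b\<bar> \<le> R" "\<bar>\<alpha>\<bar> \<le> R" "\<bar>\<beta>\<bar> \<le> R"
  shows "\<bar>(a^4 - b^4) - (\<alpha>^4 - \<beta>^4)\<bar>
    \<le> 4 * R^3 * \<bar>(a - \<alpha>) - (b - \<beta>)\<bar> + \<bar>b - \<beta>\<bar> * (6 * R^2 * (\<bar>a - b\<bar> + \<bar>\<alpha> - \<beta>\<bar>))"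
proof -
  have "(a^4 - b^4) - (\<alpha>^4 - \<beta>^4) = ((a - \<alpha>) - (b - \<beta>)) * quartic_quotient a \<alpha> +
      (b - \<beta>) * (quartic_quotient a \<alpha> - quartic_quotient b \<beta>)"
    unfolding quartic_quotient_def by algebra
  moreover have "\<bar>((a - \<alpha>) - (b - \<beta>)) * quartic_quotient a \<alpha>\<bar> \<le> \<bar>(a - \<alpha>) - (b - \<beta>)\<bar> * (4 * R^3)"
    unfolding abs_mult using abs_quartic_quotient_le assms by (intro mult_left_mono) auto
  moreover have "\<bar>(b - \<beta>) * (quartic_quotient a \<alpha> - quartic_quotient b \<beta>)\<bar>
      \<le> \<bar>b - \<beta>\<bar> * (6 * R^2 * (\<bar>a - b\<bar> + \<bar>\<alpha> - \<beta>\<bar>))"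
    unfolding abs_mult using abs_quartic_quotient_diff_le[OF assms] by (intro mult_left_mono) auto
  ultimately show ?thesis by (simp add: mult_ac) linarith
qed

text \<open>With this notation the equation of the theorem reads f'' - c f' = nonlinearity f.\<close>
definition nonlinearity :: "(real \<Rightarrow> real) \<Rightarrow> real \<Rightarrow> real" where
  "nonlinearity u t = u t ^ 4 - conv_E (\<lambda>\<eta>. u \<eta> ^ 4) t"

definition decay_class :: "real \<Rightarrow> real \<Rightarrow> (real \<Rightarrow> real) \<Rightarrow> real \<Rightarrow> bool" where
  "decay_class eps A u L \<longleftrightarrow>
     continuous_on {0..} u \<and> u 0 = eps \<and> (\<forall>y\<ge>0. \<bar>u y - L\<bar> \<le> A * exp (-y/2))"

lemma
  assumes "decay_class eps A u L"
  shows decay_class_nonneg: "A \<ge> 0"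
    and decay_class_limit_near: "\<bar>L - eps\<bar> \<le> A"
    and decay_class_abs_limit_le: "\<bar>L\<bar> \<le> \<bar>eps\<bar> + 2*A"
    and decay_class_abs_le: "\<And>y. y \<ge> 0 \<Longrightarrow> \<bar>u y\<bar> \<le> \<bar>eps\<bar> + 2*A"
    and decay_class_near_initial: "\<And>y. y \<ge> 0 \<Longrightarrow> \<bar>u y - eps\<bar> \<le> 2*A"
proof -
  have u0: "\<bar>u 0 - L\<bar> \<le> A * exp (-0/2)" "u 0 = eps"
    using assms unfolding decay_class_def by blast+
  then show A: "A \<ge> 0" by simp
  show L: "\<bar>L - eps\<bar> \<le> A" using u0 by simp
  then show "\<bar>L\<bar> \<le> \<bar>eps\<bar> + 2*A" using A by linarith
  fix y :: real assume y: "y \<ge> 0"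
  have "\<bar>u y - L\<bar> \<le> A * exp (-y/2)" using assms y unfolding decay_class_def by blast
  also have "\<dots> \<le> A" using A y by (simp add: mult_left_le)
  finally show "\<bar>u y\<bar> \<le> \<bar>eps\<bar> + 2*A" "\<bar>u y - eps\<bar> \<le> 2*A" using L by linarith+
qed

lemma decay_class_cong:
  assumes "decay_class eps A u L" "\<And>y. y \<ge> 0 \<Longrightarrow> v y = u y"
  shows "decay_class eps A v L"
  using assms continuous_on_cong[of "{0..}" "{0..}" v u] unfolding decay_class_def by auto

lemma decay_class_limit_unique:
  assumes "decay_class eps A u L1" "decay_class eps A u L2" shows "L1 = L2"
proof -
  have "((\<lambda>y::real. 2 * A * exp (-y/2)) \<longlongrightarrow> 0) at_top" by real_asymp
  moreover have "\<forall>\<^sub>F y in at_top. \<bar>L1 - L2\<bar> \<le> 2 * A * exp (-y/2)"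
    using eventually_ge_at_top[of "0::real"]
  proof eventually_elim
    case (elim y)
    have "\<bar>u y - L1\<bar> \<le> A * exp (-y/2)" "\<bar>u y - L2\<bar> \<le> A * exp (-y/2)"
      using assms elim unfolding decay_class_def by auto
    then show ?case by linarith
  qed
  ultimately have "\<bar>L1 - L2\<bar> \<le> 0"
    by (intro tendsto_le[OF trivial_limit_at_top_linorder _ tendsto_const])
  then show ?thesis by simp
qed

lemma decay_class_exp_decay: "decay_class eps A u L \<Longrightarrow> exp_decay A u L"
  unfolding exp_decay_def decay_class_def
proof (intro conjI)
  assume u: "continuous_on {0..} u \<and> u 0 = eps \<and> (\<forall>y\<ge>0. \<bar>u y - L\<bar> \<le> A * exp (- y / 2))"
  have "((\<lambda>y::real. A * exp (-y/2)) \<longlongrightarrow> 0) at_top" by real_asymp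
  moreover have "\<forall>\<^sub>F y in at_top. norm (u y - L) \<le> A * exp (-y/2)"
    using eventually_ge_at_top[of "0::real"] by eventually_elim (use u in auto)
  ultimately show "(u \<longlongrightarrow> L) at_top"
    by (rule Lim_null_comparison[rotated, THEN LIM_zero_cancel])
qed auto

lemma half_line_measurable_pow4:
  "continuous_on {0..} u \<Longrightarrow> half_line_measurable (\<lambda>\<eta>. u \<eta> ^ 4)"
  by (intro half_line_measurable_continuous_on continuous_intros)

lemma abs_pow4_le: "\<bar>x\<bar> \<le> R \<Longrightarrow> \<bar>(x::real) ^ 4\<bar> \<le> R ^ 4"
  using power_mono[of "\<bar>x\<bar>" R 4] by (simp add: power_abs)

lemma continuous_on_nonlinearity:
  assumes "continuous_on {0..} u" "\<And>y. y \<ge> 0 \<Longrightarrow> \<bar>u y\<bar> \<le> R"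
  shows "continuous_on {0..} (nonlinearity u)"
proof -
  have "continuous_on {0..} (conv_E (\<lambda>\<eta>. u \<eta> ^ 4))"
    by (rule continuous_on_conv_E[OF half_line_measurable_pow4[OF assms(1)] abs_pow4_le[OF assms(2)]])
  then show ?thesis
    unfolding nonlinearity_def[abs_def] using assms(1) by (intro continuous_intros)
qed

lemma nonlinearity_decays:
  assumes u: "decay_class eps A u L" and R: "R = \<bar>eps\<bar> + 2*A"
  shows "decays_exp_half (nonlinearity u) (12 * R^3 * A + 2 * R^4)"
  unfolding decays_exp_half_def
proof (intro conjI allI impI)
  have uc: "continuous_on {0..} u" using u unfolding decay_class_def by blast
  note uR = decay_class_abs_le[OF u, folded R]
  show "continuous_on {0..} (nonlinearity u)" by (rule continuous_on_nonlinearity[OF uc uR])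
  fix t :: real assume t: "t \<ge> 0"
  have L4: "\<bar>u \<eta> ^ 4 - L ^ 4\<bar> \<le> (4 * R^3 * A) * exp (-\<eta>/2)" if "\<eta> \<ge> 0" for \<eta>
  proof -
    have "\<bar>u \<eta> ^ 4 - L ^ 4\<bar> \<le> 4 * R^3 * \<bar>u \<eta> - L\<bar>"
      using decay_class_abs_limit_le[OF u] uR that R by (intro abs_pow4_diff_le) auto
    also have "\<dots> \<le> 4 * R^3 * (A * exp (-\<eta>/2))"
      using u that R decay_class_nonneg[OF u] unfolding decay_class_def by (intro mult_left_mono) auto
    finally show ?thesis by (simp add: mult_ac)
  qed
  have "\<bar>nonlinearity u t\<bar> \<le> (3 * (4 * R^3 * A) + 2 * \<bar>L ^ 4\<bar>) * exp (-t/2)"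
    unfolding nonlinearity_def by (rule abs_minus_conv_E_le[OF half_line_measurable_pow4[OF uc] L4 t])
  also have "\<dots> \<le> (12 * R^3 * A + 2 * R^4) * exp (-t/2)"
    using abs_pow4_le[OF decay_class_abs_limit_le[OF u, folded R]] by (intro mult_right_mono) auto
  finally show "\<bar>nonlinearity u t\<bar> \<le> (12 * R^3 * A + 2 * R^4) * exp (-t/2)" .
qed

text \<open>The contraction argument takes place on pairs (u, L) with the distance
  max |Lu - Lv| (sup_y e^{y/2} |(u y - Lu) - (v y - Lv)|); \<open>exp_close\<close> bounds it by d.\<close>
definition exp_close :: "(real \<Rightarrow> real) \<Rightarrow> real \<Rightarrow> (real \<Rightarrow> real) \<Rightarrow> real \<Rightarrow> real \<Rightarrow> bool" where
  "exp_close u Lu v Lv d \<longleftrightarrow>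
     \<bar>Lu - Lv\<bar> \<le> d \<and> (\<forall>y\<ge>0. \<bar>(u y - Lu) - (v y - Lv)\<bar> \<le> d * exp (-y/2))"

lemma exp_close_nonneg: "exp_close u Lu v Lv d \<Longrightarrow> d \<ge> 0"
  unfolding exp_close_def by (meson abs_ge_zero order_trans)

lemma exp_close_abs_le:
  assumes "exp_close u Lu v Lv d" "y \<ge> 0"
  shows "\<bar>u y - v y\<bar> \<le> 2 * d"
proof -
  have "d * exp (-y/2) \<le> d"
    using exp_close_nonneg[OF assms(1)] assms(2) by (simp add: mult_left_le)
  then show ?thesis using assms unfolding exp_close_def by fastforce
qed

lemma abs_pow4_diff_exp_close_le:
  assumes u: "decay_class eps A u Lu" and v: "decay_class eps A v Lv" and uv: "exp_close u Lu v Lv d"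
    and R: "R = \<bar>eps\<bar> + 2*A" and \<eta>: "\<eta> \<ge> 0"
  shows "\<bar>(u \<eta> ^ 4 - v \<eta> ^ 4) - (Lu ^ 4 - Lv ^ 4)\<bar> \<le> ((4 * R^3 + 18 * R^2 * A) * d) * exp (-\<eta>/2)"
proof -
  have A: "A \<ge> 0" and R0: "R \<ge> 0" using decay_class_nonneg[OF u] R by auto
  have c1: "\<bar>(u \<eta> - Lu) - (v \<eta> - Lv)\<bar> \<le> d * exp (-\<eta>/2)" "\<bar>Lu - Lv\<bar> \<le> d"
    using uv \<eta> unfolding exp_close_def by auto
  have c2: "\<bar>v \<eta> - Lv\<bar> \<le> A * exp (-\<eta>/2)" using v \<eta> unfolding decay_class_def by auto
  have "\<bar>(u \<eta> ^ 4 - v \<eta> ^ 4) - (Lu ^ 4 - Lv ^ 4)\<bar> \<le>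
     4 * R^3 * \<bar>(u \<eta> - Lu) - (v \<eta> - Lv)\<bar> + \<bar>v \<eta> - Lv\<bar> * (6 * R^2 * (\<bar>u \<eta> - v \<eta>\<bar> + \<bar>Lu - Lv\<bar>))"
    using decay_class_abs_le[OF u \<eta>] decay_class_abs_le[OF v \<eta>]
      decay_class_abs_limit_le[OF u] decay_class_abs_limit_le[OF v] R
    by (intro abs_pow4_second_diff_le) auto
  also have "\<dots> \<le> 4 * R^3 * (d * exp (-\<eta>/2)) + (A * exp (-\<eta>/2)) * (6 * R^2 * (2 * d + d))"
    using c1 c2 exp_close_abs_le[OF uv \<eta>] A R0
    by (intro add_mono mult_left_mono mult_mono) auto
  also have "\<dots> = ((4 * R^3 + 18 * R^2 * A) * d) * exp (-\<eta>/2)" by (simp add: algebra_simps)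
  finally show ?thesis .
qed

lemma nonlinearity_diff_decays:
  assumes u: "decay_class eps A u Lu" and v: "decay_class eps A v Lv" and uv: "exp_close u Lu v Lv d"
    and R: "R = \<bar>eps\<bar> + 2*A"
  shows "decays_exp_half (\<lambda>t. nonlinearity u t - nonlinearity v t) ((20 * R^3 + 54 * R^2 * A) * d)"
  unfolding decays_exp_half_def
proof (intro conjI allI impI)
  have uc: "continuous_on {0..} u" and vc: "continuous_on {0..} v"
    using u v unfolding decay_class_def by blast+
  note uR = decay_class_abs_le[OF u, folded R] and vR = decay_class_abs_le[OF v, folded R]
  show "continuous_on {0..} (\<lambda>t. nonlinearity u t - nonlinearity v t)"
    using continuous_on_nonlinearity[OF uc uR] continuous_on_nonlinearity[OF vc vR]
    by (intro continuous_intros)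
  fix t :: real assume t: "t \<ge> 0"
  have "conv_E (\<lambda>\<eta>. u \<eta> ^ 4) t - conv_E (\<lambda>\<eta>. v \<eta> ^ 4) t = conv_E (\<lambda>\<eta>. u \<eta> ^ 4 - v \<eta> ^ 4) t"
    by (rule conv_E_diff[OF half_line_measurable_pow4[OF uc] abs_pow4_le[OF uR]
          half_line_measurable_pow4[OF vc] abs_pow4_le[OF vR]])
  then have "\<bar>nonlinearity u t - nonlinearity v t\<bar> =
      \<bar>(u t ^ 4 - v t ^ 4) - conv_E (\<lambda>\<eta>. u \<eta> ^ 4 - v \<eta> ^ 4) t\<bar>"
    unfolding nonlinearity_def by (simp add: algebra_simps)
  also have "\<dots> \<le> (3 * ((4 * R^3 + 18 * R^2 * A) * d) + 2 * \<bar>Lu ^ 4 - Lv ^ 4\<bar>) * exp (-t/2)"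
    by (intro abs_minus_conv_E_le t half_line_measurable_diff half_line_measurable_pow4 uc vc
        abs_pow4_diff_exp_close_le[OF u v uv R])
  also have "\<dots> \<le> (3 * ((4 * R^3 + 18 * R^2 * A) * d) + 2 * (4 * R^3 * d)) * exp (-t/2)"
  proof -
    have "\<bar>Lu ^ 4 - Lv ^ 4\<bar> \<le> 4 * R^3 * \<bar>Lu - Lv\<bar>"
      using decay_class_abs_limit_le[OF u] decay_class_abs_limit_le[OF v] R by (intro abs_pow4_diff_le) auto
    also have "\<dots> \<le> 4 * R^3 * d"
      using uv R decay_class_nonneg[OF u] unfolding exp_close_def by (intro mult_left_mono) auto
    finally show ?thesis by (intro mult_right_mono add_left_mono mult_left_mono) auto
  qed
  also have "\<dots> = ((20 * R^3 + 54 * R^2 * A) * d) * exp (-t/2)" by (simp add: algebra_simps)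
  finally show "\<bar>nonlinearity u t - nonlinearity v t\<bar> \<le> ((20 * R^3 + 54 * R^2 * A) * d) * exp (-t/2)" .
qed

section \<open>The fixed-point map\<close>

text \<open>If f'' - c f' = nonlinearity f, f 0 = eps and f' is bounded, then f' is the bounded
  solution of F' = c F + nonlinearity f; integrating once more gives f = Phi c eps f.\<close>
definition Phi :: "real \<Rightarrow> real \<Rightarrow> (real \<Rightarrow> real) \<Rightarrow> real \<Rightarrow> real" where
  "Phi c eps u y = eps + integral {0..y} (bounded_solution c (nonlinearity u))"

definition Phi_limit :: "real \<Rightarrow> real \<Rightarrow> (real \<Rightarrow> real) \<Rightarrow> real" where
  "Phi_limit c eps u = eps + (LINT y:{0..}|lborel. bounded_solution c (nonlinearity u) y)"

lemma Phi_0: "Phi c eps u 0 = eps"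
  unfolding Phi_def by simp

lemma Phi_minus_limit:
  assumes h: "decays_exp_half (nonlinearity u) H" and c: "c \<ge> 0" and y: "y \<ge> 0"
  shows "Phi c eps u y - Phi_limit c eps u = - (LINT t:{y<..}|lborel. bounded_solution c (nonlinearity u) t)"
proof -
  let ?F = "bounded_solution c (nonlinearity u)"
  have i: "set_integrable lborel {0..y} ?F" "set_integrable lborel {y<..} ?F"
    by (rule set_integrable_bounded_solution[OF h order_refl c]; auto)
      (rule set_integrable_bounded_solution[OF h y c]; auto)
  have "{0..} = {0..y} \<union> {y<..}" using y by auto
  then have "(LINT t:{0..}|lborel. ?F t) = (LINT t:{0..y} \<union> {y<..}|lborel. ?F t)"
    by simp
  also have "\<dots> = (LINT t:{0..y}|lborel. ?F t) + (LINT t:{y<..}|lborel. ?F t)"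
    by (rule set_integral_Un[OF _ i]) auto
  finally show ?thesis
    unfolding Phi_def Phi_limit_def using set_borel_integral_eq_integral(2)[OF i(1)] by simp
qed

lemma Phi_has_derivative:
  assumes h: "decays_exp_half (nonlinearity u) H" and c: "c \<ge> 0" and y: "y \<ge> 0"
  shows "(Phi c eps u has_real_derivative bounded_solution c (nonlinearity u) y) (at y within {0..})"
proof -
  have "((\<lambda>x. integral {0..x} (bounded_solution c (nonlinearity u))) has_real_derivative
      bounded_solution c (nonlinearity u) y) (at y within {0..})"
    by (rule has_real_derivative_integral_atLeast[OF continuous_on_bounded_solution[OF h c] y])
  then show ?thesis
    unfolding Phi_def[abs_def] by (auto intro!: derivative_eq_intros)
qed

lemma continuous_on_Phi:
  assumes "decays_exp_half (nonlinearity u) H" "c \<ge> 0"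
  shows "continuous_on {0..} (Phi c eps u)"
  using Phi_has_derivative[OF assms] by (intro continuous_on_if_has_derivative_within) auto

lemma Phi_decay_class:
  assumes c: "c \<ge> 0" and u: "decay_class eps A u L" and R: "R = \<bar>eps\<bar> + 2*A"
    and small: "4 * (12 * R^3 * A + 2 * R^4) \<le> A"
  shows "decay_class eps A (Phi c eps u) (Phi_limit c eps u)"
  unfolding decay_class_def
proof (intro conjI allI impI)
  have h: "decays_exp_half (nonlinearity u) (12 * R^3 * A + 2 * R^4)"
    by (rule nonlinearity_decays[OF u R])
  show "continuous_on {0..} (Phi c eps u)" by (rule continuous_on_Phi[OF h c])
  show "Phi c eps u 0 = eps" by (rule Phi_0)
  fix y :: real assume y: "y \<ge> 0"
  have "\<bar>Phi c eps u y - Phi_limit c eps u\<bar> = \<bar>LINT t:{y<..}|lborel. bounded_solution c (nonlinearity u) t\<bar>"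
    using Phi_minus_limit[OF h c y] by simp
  also have "\<dots> \<le> 4 * (12 * R^3 * A + 2 * R^4) * exp (-y/2)"
    by (rule abs_set_integral_bounded_solution_le[OF h y c]) auto
  also have "\<dots> \<le> A * exp (-y/2)"
    using small by (intro mult_right_mono) auto
  finally show "\<bar>Phi c eps u y - Phi_limit c eps u\<bar> \<le> A * exp (-y/2)" .
qed

lemma Phi_contraction:
  assumes c: "c \<ge> 0" and u: "decay_class eps A u Lu" and v: "decay_class eps A v Lv"
    and uv: "exp_close u Lu v Lv d" and R: "R = \<bar>eps\<bar> + 2*A"
    and small: "4 * (20 * R^3 + 54 * R^2 * A) \<le> 1/2"
  shows "exp_close (Phi c eps u) (Phi_limit c eps u) (Phi c eps v) (Phi_limit c eps v) (d/2)"
  unfolding exp_close_def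
proof (intro conjI allI impI)
  let ?F = "\<lambda>w. bounded_solution c (nonlinearity w)"
  let ?D = "bounded_solution c (\<lambda>t. nonlinearity u t - nonlinearity v t)"
  have hu: "decays_exp_half (nonlinearity u) (12 * R^3 * A + 2 * R^4)"
    and hv: "decays_exp_half (nonlinearity v) (12 * R^3 * A + 2 * R^4)"
    by (rule nonlinearity_decays[OF u R], rule nonlinearity_decays[OF v R])
  have hd: "decays_exp_half (\<lambda>t. nonlinearity u t - nonlinearity v t) ((20 * R^3 + 54 * R^2 * A) * d)"
    by (rule nonlinearity_diff_decays[OF u v uv R])
  have k: "4 * ((20 * R^3 + 54 * R^2 * A) * d) \<le> d/2"
    using mult_right_mono[OF small exp_close_nonneg[OF uv]] by (simp add: mult_ac)
  have "Phi_limit c eps u - Phi_limit c eps v = (LINT t:{0..}|lborel. ?D t)"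
    unfolding Phi_limit_def using set_integral_bounded_solution_diff[OF hu hv c order_refl] by simp
  then have "\<bar>Phi_limit c eps u - Phi_limit c eps v\<bar> \<le> 4 * ((20 * R^3 + 54 * R^2 * A) * d) * exp (-0/2)"
    using abs_set_integral_bounded_solution_le[OF hd order_refl c, of "{0..}"] by simp
  then show "\<bar>Phi_limit c eps u - Phi_limit c eps v\<bar> \<le> d/2" using k by simp
  fix y :: real assume y: "y \<ge> 0"
  have "(Phi c eps u y - Phi_limit c eps u) - (Phi c eps v y - Phi_limit c eps v) =
     - ((LINT t:{y<..}|lborel. ?F u t) - (LINT t:{y<..}|lborel. ?F v t))"
    using Phi_minus_limit[OF hu c y, of eps] Phi_minus_limit[OF hv c y, of eps] by simp
  also have "\<dots> = - (LINT t:{y<..}|lborel. ?D t)"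
    by (subst set_integral_bounded_solution_diff[OF hu hv c y]) auto
  finally have "\<bar>(Phi c eps u y - Phi_limit c eps u) - (Phi c eps v y - Phi_limit c eps v)\<bar> =
      \<bar>LINT t:{y<..}|lborel. ?D t\<bar>"
    by simp
  also have "\<dots> \<le> 4 * ((20 * R^3 + 54 * R^2 * A) * d) * exp (-y/2)"
    by (rule abs_set_integral_bounded_solution_le[OF hd y c]) auto
  also have "\<dots> \<le> d/2 * exp (-y/2)"
    using k by (intro mult_right_mono) auto
  finally show "\<bar>(Phi c eps u y - Phi_limit c eps u) - (Phi c eps v y - Phi_limit c eps v)\<bar>
      \<le> d/2 * exp (-y/2)" .
qed

section \<open>The contraction argument\<close>

lemma exp_close_sym: "exp_close u Lu v Lv d \<Longrightarrow> exp_close v Lv u Lu d"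
  unfolding exp_close_def by (simp add: abs_minus_commute)

lemma exp_close_trans:
  assumes "exp_close u Lu v Lv d1" "exp_close v Lv w Lw d2"
  shows "exp_close u Lu w Lw (d1 + d2)"
  unfolding exp_close_def
proof (intro conjI allI impI)
  show "\<bar>Lu - Lw\<bar> \<le> d1 + d2" using assms unfolding exp_close_def by linarith
  fix y :: real assume "y \<ge> 0"
  then have "\<bar>(u y - Lu) - (v y - Lv)\<bar> \<le> d1 * exp (-y/2)" "\<bar>(v y - Lv) - (w y - Lw)\<bar> \<le> d2 * exp (-y/2)"
    using assms unfolding exp_close_def by auto
  then show "\<bar>(u y - Lu) - (w y - Lw)\<bar> \<le> (d1 + d2) * exp (-y/2)"
    by (simp add: algebra_simps)
qed

lemma exp_close_cong:
  assumes "exp_close u Lu v Lv d" "\<And>y. y \<ge> 0 \<Longrightarrow> u' y = u y" "\<And>y. y \<ge> 0 \<Longrightarrow> v' y = v y"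
  shows "exp_close u' Lu v' Lv d"
  using assms unfolding exp_close_def by auto

lemma decay_class_exp_close:
  assumes u: "decay_class eps A u Lu" and v: "decay_class eps A v Lv"
  shows "exp_close u Lu v Lv (2*A)"
  unfolding exp_close_def
proof (intro conjI allI impI)
  show "\<bar>Lu - Lv\<bar> \<le> 2*A"
    using decay_class_limit_near[OF u] decay_class_limit_near[OF v] by linarith
  fix y :: real assume "y \<ge> 0"
  then have "\<bar>u y - Lu\<bar> \<le> A * exp (-y/2)" "\<bar>v y - Lv\<bar> \<le> A * exp (-y/2)"
    using u v unfolding decay_class_def by auto
  then show "\<bar>(u y - Lu) - (v y - Lv)\<bar> \<le> 2*A * exp (-y/2)" by linarith
qed

lemma tendsto_half_power: "(\<lambda>n. K * (1/2::real)^n) \<longlonglongrightarrow> 0"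
  using tendsto_mult_right_zero[OF LIMSEQ_power_zero[of "1/2::real"], of K] by simp

lemma nonpos_if_le_half_power:
  assumes "\<And>n. x \<le> K * (1/2::real)^n" shows "x \<le> 0"
  by (rule LIMSEQ_le_const[OF tendsto_half_power[of K]]) (use assms in blast)

lemma exp_close_half_powers_imp_eq:
  assumes "\<And>n. exp_close u Lu v Lv (K * (1/2)^n)"
  shows "Lu = Lv" and "\<And>y. y \<ge> 0 \<Longrightarrow> u y = v y"
proof -
  have L: "\<bar>Lu - Lv\<bar> \<le> 0"
    by (rule nonpos_if_le_half_power[of _ K]) (use assms in \<open>simp add: exp_close_def\<close>)
  then show "Lu = Lv" by simp
  fix y :: real assume "y \<ge> 0"
  then have "\<bar>(u y - Lu) - (v y - Lv)\<bar> \<le> exp (-y/2) * K * (1/2)^n" for n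
    using assms[of n] unfolding exp_close_def by (simp add: mult_ac)
  then have "\<bar>(u y - Lu) - (v y - Lv)\<bar> \<le> 0"
    by (intro nonpos_if_le_half_power[of _ "exp (-y/2) * K"]) (simp add: mult.assoc)
  then show "u y = v y" using L by simp
qed

lemma abs_diff_le_geometric_tail:
  fixes f :: "nat \<Rightarrow> real"
  assumes steps: "\<And>n. \<bar>f (Suc n) - f n\<bar> \<le> K * (1/2)^n" and "n \<le> m"
  shows "\<bar>f m - f n\<bar> \<le> 2*K*(1/2)^n - 2*K*(1/2)^m"
  using \<open>n \<le> m\<close>
proof (induction m rule: dec_induct)
  case (step m)
  have "\<bar>f (Suc m) - f n\<bar> \<le> \<bar>f (Suc m) - f m\<bar> + \<bar>f m - f n\<bar>" by linarith
  also have "\<dots> \<le> K * (1/2)^m + (2*K*(1/2)^n - 2*K*(1/2)^m)" using steps[of m] step.IH by linarith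
  finally show ?case by simp
qed simp

lemma geometric_increments_converge:
  fixes f :: "nat \<Rightarrow> real"
  assumes steps: "\<And>n. \<bar>f (Suc n) - f n\<bar> \<le> K * (1/2)^n"
  obtains l where "f \<longlonglongrightarrow> l" "\<And>n. \<bar>l - f n\<bar> \<le> 2*K*(1/2)^n"
proof -
  have "K \<ge> 0" using steps[of 0] by simp
  have "summable (\<lambda>k. f (Suc k) - f k)"
    by (rule summable_comparison_test'[of "\<lambda>k. K * (1/2)^k"]) (use steps in auto)
  then have "(\<lambda>n. f 0 + (\<Sum>k<n. f (Suc k) - f k)) \<longlonglongrightarrow> f 0 + (\<Sum>k. f (Suc k) - f k)"
    by (intro tendsto_add tendsto_const summable_LIMSEQ)
  then have lim: "f \<longlonglongrightarrow> f 0 + (\<Sum>k. f (Suc k) - f k)"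
    by (simp add: sum_lessThan_telescope)
  moreover have "\<bar>(f 0 + (\<Sum>k. f (Suc k) - f k)) - f n\<bar> \<le> 2*K*(1/2)^n" for n
  proof (rule LIMSEQ_le_const2)
    show "(\<lambda>m. \<bar>f m - f n\<bar>) \<longlonglongrightarrow> \<bar>(f 0 + (\<Sum>k. f (Suc k) - f k)) - f n\<bar>"
      by (intro tendsto_intros lim)
    have "\<bar>f m - f n\<bar> \<le> 2*K*(1/2)^n" if "n \<le> m" for m
    proof -
      have "0 \<le> 2*K*(1/2::real)^m" using \<open>K \<ge> 0\<close> by simp
      then show ?thesis using abs_diff_le_geometric_tail[OF steps that] by linarith
    qed
    then show "\<exists>N. \<forall>m\<ge>N. \<bar>f m - f n\<bar> \<le> 2*K*(1/2)^n" by blast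
  qed
  ultimately show ?thesis using that by blast
qed

lemma continuous_on_half_power_limit:
  assumes "\<And>n. continuous_on S (u n)" "\<And>n x. x \<in> S \<Longrightarrow> \<bar>u n x - U x\<bar> \<le> K * (1/2)^n"
  shows "continuous_on S (U :: real \<Rightarrow> real)"
proof (rule uniform_limit_theorem[where f=u and F=sequentially])
  show "uniform_limit S u U sequentially"
  proof (rule uniform_limitI)
    fix e :: real assume "e > 0"
    then have "\<forall>\<^sub>F n in sequentially. K * (1/2::real)^n < e"
      using order_tendstoD(2)[OF tendsto_half_power] by blast
    then show "\<forall>\<^sub>F n in sequentially. \<forall>x\<in>S. dist (u n x) (U x) < e"
      by eventually_elim (use assms(2) in \<open>auto simp: dist_real_def intro: le_less_trans\<close>)
  qed
qed (use assms(1) in simp_all)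

lemma exp_close_sequence_limit:
  assumes u: "\<And>n. decay_class eps A (u n) (L n)"
    and steps: "\<And>n. exp_close (u n) (L n) (u (Suc n)) (L (Suc n)) (K * (1/2)^n)"
  obtains U Linf where "decay_class eps A U Linf" "\<And>n. exp_close (u n) (L n) U Linf (2*K*(1/2)^n)"
proof -
  have "\<bar>L (Suc n) - L n\<bar> \<le> K * (1/2)^n" for n
    using steps[of n] unfolding exp_close_def by (simp add: abs_minus_commute)
  then obtain Linf where L: "L \<longlonglongrightarrow> Linf" "\<And>n. \<bar>Linf - L n\<bar> \<le> 2*K*(1/2)^n"
    using geometric_increments_converge by blast
  define U where "U y = lim (\<lambda>n. u n y)" for y
  have U: "(\<lambda>n. u n y - L n) \<longlonglongrightarrow> U y - Linf"
    "\<And>n. \<bar>(U y - Linf) - (u n y - L n)\<bar> \<le> 2*(K * exp (-y/2))*(1/2)^n" if "y \<ge> 0" for y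
  proof -
    have "\<bar>(u (Suc n) y - L (Suc n)) - (u n y - L n)\<bar> \<le> (K * exp (-y/2))*(1/2)^n" for n
      using steps[of n] that unfolding exp_close_def by (simp add: abs_minus_commute mult_ac)
    then obtain l where l: "(\<lambda>n. u n y - L n) \<longlonglongrightarrow> l" "\<And>n. \<bar>l - (u n y - L n)\<bar> \<le> 2*(K * exp (-y/2))*(1/2)^n"
      using geometric_increments_converge[of "\<lambda>n. u n y - L n" "K * exp (-y/2)"] by blast
    have "(\<lambda>n. (u n y - L n) + L n) \<longlonglongrightarrow> l + Linf" by (intro tendsto_add l L)
    then have "U y = l + Linf" unfolding U_def by (simp add: limI)
    then show "(\<lambda>n. u n y - L n) \<longlonglongrightarrow> U y - Linf"
      "\<And>n. \<bar>(U y - Linf) - (u n y - L n)\<bar> \<le> 2*(K * exp (-y/2))*(1/2)^n" using l by simp_all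
  qed
  have close: "exp_close (u n) (L n) U Linf (2*K*(1/2)^n)" for n
    unfolding exp_close_def using L(2)[of n] U(2)[of _ n]
    by (auto simp: abs_minus_commute mult_ac)
  have "decay_class eps A U Linf"
    unfolding decay_class_def
  proof (intro conjI allI impI)
    show "continuous_on {0..} U"
    proof (rule continuous_on_half_power_limit)
      show "continuous_on {0..} (u n)" for n using u unfolding decay_class_def by blast
      show "\<bar>u n y - U y\<bar> \<le> (4*K) * (1/2)^n" if "y \<in> {0..}" for n y
        using exp_close_abs_le[OF close that[simplified]] by (simp add: mult_ac)
    qed
    show "U 0 = eps" using u unfolding U_def decay_class_def by simp
    fix y :: real assume "y \<ge> 0"
    show "\<bar>U y - Linf\<bar> \<le> A * exp (-y/2)"
    proof (rule LIMSEQ_le_const2)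
      show "(\<lambda>n. \<bar>u n y - L n\<bar>) \<longlonglongrightarrow> \<bar>U y - Linf\<bar>" using U(1)[OF \<open>y \<ge> 0\<close>] by (rule tendsto_rabs)
      show "\<exists>N. \<forall>n\<ge>N. \<bar>u n y - L n\<bar> \<le> A * exp (-y/2)"
        using u \<open>y \<ge> 0\<close> unfolding decay_class_def by blast
    qed
  qed
  then show ?thesis using close that by blast
qed

fun Phi_iter :: "real \<Rightarrow> real \<Rightarrow> nat \<Rightarrow> (real \<Rightarrow> real) \<times> real" where
  "Phi_iter c eps 0 = ((\<lambda>_. eps), eps)"
| "Phi_iter c eps (Suc n) = (Phi c eps (fst (Phi_iter c eps n)), Phi_limit c eps (fst (Phi_iter c eps n)))"

locale small_data =
  fixes c eps A R :: real
  assumes c: "c > 0" and A: "A \<ge> 0" and R: "R = \<bar>eps\<bar> + 2*A"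
    and self_map: "4 * (12 * R^3 * A + 2 * R^4) \<le> A"
    and contraction: "4 * (20 * R^3 + 54 * R^2 * A) \<le> 1/2"
begin

lemma Phi_preserves_decay_class: "decay_class eps A u L \<Longrightarrow> decay_class eps A (Phi c eps u) (Phi_limit c eps u)"
  using Phi_decay_class[OF _ _ R self_map] c by simp

lemma Phi_halves_exp_close:
  "decay_class eps A u Lu \<Longrightarrow> decay_class eps A v Lv \<Longrightarrow> exp_close u Lu v Lv d \<Longrightarrow>
    exp_close (Phi c eps u) (Phi_limit c eps u) (Phi c eps v) (Phi_limit c eps v) (d/2)"
  using Phi_contraction[OF _ _ _ _ R contraction] c by simp

abbreviation "iter n \<equiv> fst (Phi_iter c eps n)"
abbreviation "iter_limit n \<equiv> snd (Phi_iter c eps n)"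

lemma Phi_iter_close:
  "decay_class eps A (iter n) (iter_limit n) \<and>
   exp_close (iter n) (iter_limit n) (iter (Suc n)) (iter_limit (Suc n)) (2*A*(1/2)^n)"
proof (induction n)
  case 0
  have "decay_class eps A (iter 0) (iter_limit 0)" unfolding decay_class_def using A by auto
  then show ?case using decay_class_exp_close Phi_preserves_decay_class by simp
next
  case (Suc n)
  then have u: "decay_class eps A (iter n) (iter_limit n)"
    and close: "exp_close (iter n) (iter_limit n) (iter (Suc n)) (iter_limit (Suc n)) (2*A*(1/2)^n)"
    by auto
  have u': "decay_class eps A (iter (Suc n)) (iter_limit (Suc n))"
    using Phi_preserves_decay_class[OF u] by simp
  have "exp_close (iter (Suc n)) (iter_limit (Suc n)) (iter (Suc (Suc n))) (iter_limit (Suc (Suc n)))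
      (2*A*(1/2)^n / 2)"
    using Phi_halves_exp_close[OF u u' close] by simp
  then show ?case using u' by (simp add: mult_ac)
qed

lemma fixed_point_limit:
  assumes "decay_class eps A U L" "\<And>y. y \<ge> 0 \<Longrightarrow> Phi c eps U y = U y"
  shows "Phi_limit c eps U = L"
proof (rule decay_class_limit_unique)
  show "decay_class eps A (Phi c eps U) (Phi_limit c eps U)" by (rule Phi_preserves_decay_class[OF assms(1)])
  show "decay_class eps A (Phi c eps U) L" by (rule decay_class_cong[OF assms(1)]) (simp add: assms(2))
qed

lemma fixed_point_exists:
  obtains U L where "decay_class eps A U L" "\<And>y. y \<ge> 0 \<Longrightarrow> Phi c eps U y = U y"
proof -
  obtain U L where U: "decay_class eps A U L"
    and close: "\<And>n. exp_close (iter n) (iter_limit n) U L (2*(2*A)*(1/2)^n)"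
    using exp_close_sequence_limit[of eps A iter iter_limit "2*A"] Phi_iter_close by blast
  have "exp_close U L (Phi c eps U) (Phi_limit c eps U) (4*A*(1/2)^n)" for n
  proof -
    have "exp_close U L (iter (Suc n)) (iter_limit (Suc n)) (4*A*(1/2)^Suc n)"
      using exp_close_sym[OF close[of "Suc n"]] by (simp add: mult_ac)
    moreover have "exp_close (iter (Suc n)) (iter_limit (Suc n)) (Phi c eps U) (Phi_limit c eps U) (2*A*(1/2)^n)"
      using Phi_halves_exp_close[OF _ U close[of n]] Phi_iter_close by (simp add: mult_ac)
    ultimately show ?thesis
      by (auto dest: exp_close_trans simp: mult_ac)
  qed
  then have "Phi c eps U y = U y" if "y \<ge> 0" for y
    using exp_close_half_powers_imp_eq(2) that by metis
  then show ?thesis using that U by blast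
qed

lemma fixed_point_unique:
  assumes U: "decay_class eps A U L" "\<And>y. y \<ge> 0 \<Longrightarrow> Phi c eps U y = U y"
    and V: "decay_class eps A V M" "\<And>y. y \<ge> 0 \<Longrightarrow> Phi c eps V y = V y"
    and y: "y \<ge> 0"
  shows "U y = V y"
proof -
  have "exp_close U L V M (2*A*(1/2)^n)" for n
  proof (induction n)
    case 0
    show ?case using decay_class_exp_close[OF U(1) V(1)] by simp
  next
    case (Suc n)
    have "exp_close (Phi c eps U) (Phi_limit c eps U) (Phi c eps V) (Phi_limit c eps V) (2*A*(1/2)^n / 2)"
      by (rule Phi_halves_exp_close[OF U(1) V(1) Suc])
    then show ?case
      using fixed_point_limit[OF U] fixed_point_limit[OF V] U(2) V(2)
      by (auto elim: exp_close_cong simp: mult_ac)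
  qed
  then show ?thesis by (rule exp_close_half_powers_imp_eq(2)[OF _ y])
qed

end

section \<open>Fixed points and solutions\<close>

context small_data
begin

lemma Phi_derivatives:
  assumes "decay_class eps A u L"
  defines "F \<equiv> bounded_solution c (nonlinearity u)" and "H \<equiv> 12 * R^3 * A + 2 * R^4"
  shows "\<And>y. y \<ge> 0 \<Longrightarrow> (Phi c eps u has_real_derivative F y) (at y within {0..})"
    and "\<And>y. y \<ge> 0 \<Longrightarrow> (F has_real_derivative c * F y + nonlinearity u y) (at y within {0..})"
    and "\<And>y. y \<ge> 0 \<Longrightarrow> \<bar>F y\<bar> \<le> 2*H"
    and "\<And>y. y \<ge> 0 \<Longrightarrow> \<bar>c * F y + nonlinearity u y\<bar> \<le> c * (2*H) + H"
    and "continuous_on {0..} (\<lambda>y. c * F y + nonlinearity u y)"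
proof -
  have h: "decays_exp_half (nonlinearity u) H" unfolding H_def by (rule nonlinearity_decays[OF assms(1) R])
  then show "continuous_on {0..} (\<lambda>y. c * F y + nonlinearity u y)"
    using continuous_on_bounded_solution[OF h] c unfolding F_def decays_exp_half_def
    by (intro continuous_intros) auto
  fix y :: real assume "y \<ge> 0"
  then show "(Phi c eps u has_real_derivative F y) (at y within {0..})"
    "(F has_real_derivative c * F y + nonlinearity u y) (at y within {0..})"
    "\<bar>F y\<bar> \<le> 2*H" "\<bar>c * F y + nonlinearity u y\<bar> \<le> c * (2*H) + H"
    unfolding F_def using c Phi_has_derivative[OF h] bounded_solution_has_derivative[OF h]
      abs_bounded_solution_le_const[OF h] abs_bounded_solution_derivative_le[OF h] by simp_all
qed

lemma fixed_point_second_derivative_holder: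
  assumes U: "decay_class eps A U L" "\<And>y. y \<ge> 0 \<Longrightarrow> Phi c eps U y = U y"
  defines "F \<equiv> bounded_solution c (nonlinearity U)"
  shows "\<exists>K. \<forall>x\<ge>0. \<forall>y\<ge>0.
    \<bar>(c * F x + nonlinearity U x) - (c * F y + nonlinearity U y)\<bar> \<le> K * sqrt \<bar>x - y\<bar>"
proof -
  define H where "H = 12 * R^3 * A + 2 * R^4"
  note d = Phi_derivatives[OF U(1), folded F_def H_def]
  have UR: "\<bar>U y\<bar> \<le> R" if "y \<ge> 0" for y using decay_class_abs_le[OF U(1) that] R by simp
  have dU: "(U has_real_derivative F y) (at y within {0..})" if "y \<ge> 0" for y
    using d(1)[OF that] by (rule has_field_derivative_transform_within[where d=1]) (use that U(2) in auto)
  have "\<exists>K. \<forall>x\<ge>0. \<forall>y\<ge>0. \<bar>F x - F y\<bar> \<le> K * sqrt \<bar>x - y\<bar>"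
    by (rule bounded_derivative_imp_holder_half[OF d(2) d(4) d(3)])
  then obtain K1 where K1: "\<And>x y. x \<ge> 0 \<Longrightarrow> y \<ge> 0 \<Longrightarrow> \<bar>F x - F y\<bar> \<le> K1 * sqrt \<bar>x - y\<bar>"
    by blast
  have dU4: "((\<lambda>y. U y ^ 4) has_real_derivative 4 * U y ^ 3 * F y) (at y within {0..})" if "y \<ge> 0" for y
    using dU[OF that] by (auto intro!: derivative_eq_intros)
  have "\<bar>4 * U y ^ 3 * F y\<bar> \<le> 4 * (R^3 * (2*H))" if "y \<ge> 0" for y
  proof -
    have "R \<ge> 0" using decay_class_nonneg[OF U(1)] R by simp
    then have "\<bar>U y ^ 3 * F y\<bar> \<le> R^3 * (2*H)"
      unfolding abs_mult power_abs using UR[OF that] d(3)[OF that] by (intro mult_mono power_mono) auto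
    then show ?thesis by (simp add: abs_mult mult_ac)
  qed
  then have "\<exists>K. \<forall>x\<ge>0. \<forall>y\<ge>0. \<bar>U x ^ 4 - U y ^ 4\<bar> \<le> K * sqrt \<bar>x - y\<bar>"
    using abs_pow4_le[OF UR] by (intro bounded_derivative_imp_holder_half[OF dU4])
  then obtain K2 where K2: "\<And>x y. x \<ge> 0 \<Longrightarrow> y \<ge> 0 \<Longrightarrow> \<bar>U x ^ 4 - U y ^ 4\<bar> \<le> K2 * sqrt \<bar>x - y\<bar>"
    by blast
  have K3: "\<bar>conv_E (\<lambda>\<eta>. U \<eta> ^ 4) x - conv_E (\<lambda>\<eta>. U \<eta> ^ 4) y\<bar> \<le> R^4 * (3 * sqrt 2) * sqrt \<bar>x - y\<bar>" for x y
    using U(1) unfolding decay_class_def by (intro conv_E_holder half_line_measurable_pow4 abs_pow4_le UR) auto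
  have "\<bar>(c * F x + nonlinearity U x) - (c * F y + nonlinearity U y)\<bar>
      \<le> (c * K1 + K2 + R^4 * (3 * sqrt 2)) * sqrt \<bar>x - y\<bar>" if "x \<ge> 0" "y \<ge> 0" for x y
  proof -
    have "\<bar>c * F x - c * F y\<bar> \<le> c * (K1 * sqrt \<bar>x - y\<bar>)"
      using K1[OF that] c by (simp add: abs_mult mult_left_mono flip: right_diff_distrib)
    then show ?thesis
      using K2[OF that] K3[of x y] unfolding nonlinearity_def by (simp add: algebra_simps) linarith
  qed
  then show ?thesis by blast
qed

lemma fixed_point_solves_bvp:
  assumes U: "decay_class eps A U L" "\<And>y. y \<ge> 0 \<Longrightarrow> Phi c eps U y = U y" and small: "2*A \<le> eps"
  shows "solves_bvp c eps (Phi c eps U)"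
proof -
  define f where "f = Phi c eps U"
  define F where "F = bounded_solution c (nonlinearity U)"
  note d = Phi_derivatives[OF U(1), folded F_def f_def]
  have fU: "f y = U y" if "y \<ge> 0" for y using U(2)[OF that] unfolding f_def .
  have "C2half f"
    unfolding C2half_def
  proof (rule exI[of _ F], rule exI[of _ "\<lambda>y. c * F y + nonlinearity U y"], intro conjI)
    show "\<forall>y\<ge>0. (f has_real_derivative F y) (at y within {0..})"
      and "\<forall>y\<ge>0. (F has_real_derivative c * F y + nonlinearity U y) (at y within {0..})"
      and "continuous_on {0..} (\<lambda>y. c * F y + nonlinearity U y)"
      using d(1,2,5) by blast+
    have "\<bar>f y\<bar> \<le> \<bar>eps\<bar> + 2*A" if "y \<ge> 0" for y
      using decay_class_abs_le[OF U(1) that] fU[OF that] by simp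
    then show "bounded (f ` {0..})" unfolding bounded_iff by auto
    show "bounded (F ` {0..})" and "bounded ((\<lambda>y. c * F y + nonlinearity U y) ` {0..})"
      unfolding bounded_iff using d(3,4) by auto
    show "\<exists>K. \<forall>x\<ge>0. \<forall>y\<ge>0. \<bar>(c * F x + nonlinearity U x) - (c * F y + nonlinearity U y)\<bar>
        \<le> K * sqrt \<bar>x - y\<bar>"
      unfolding F_def by (rule fixed_point_second_derivative_holder[OF U])
  qed
  moreover have "deriv (deriv f) y - c * deriv f y - f y ^ 4 = - (LINT \<eta>:{0..}|lborel. E (y - \<eta>) * f \<eta> ^ 4)"
    if "y > 0" for y
  proof -
    have "conv_E (\<lambda>\<eta>. U \<eta> ^ 4) y = conv_E (\<lambda>\<eta>. f \<eta> ^ 4) y" by (rule conv_E_cong) (simp add: fU)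
    then show ?thesis
      using deriv_deriv_eq_interior[OF d(1) d(2) that] fU[of y] that
      unfolding nonlinearity_def conv_E_def by simp
  qed
  moreover have "f y \<ge> 0" if "y \<ge> 0" for y
    using decay_class_near_initial[OF U(1) that] fU[OF that] small by linarith
  ultimately show ?thesis
    unfolding solves_bvp_def f_def using Phi_0 by auto
qed

lemma solution_is_fixed_point:
  assumes g: "solves_bvp c eps g" and dec: "exp_decay A g L"
  shows "decay_class eps A g L" and "\<And>y. y \<ge> 0 \<Longrightarrow> Phi c eps g y = g y"
proof -
  obtain g1 g2 where dg: "\<And>y. y \<ge> 0 \<Longrightarrow> (g has_real_derivative g1 y) (at y within {0..})"
    and dg1: "\<And>y. y \<ge> 0 \<Longrightarrow> (g1 has_real_derivative g2 y) (at y within {0..})"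
    and bdd: "bounded (g1 ` {0..})"
    using g unfolding solves_bvp_def C2half_def by blast
  have "continuous_on {0..} g"
    using continuous_on_if_has_derivative_within[of "{0..}" g g1] dg by auto
  then show gS: "decay_class eps A g L"
    using g dec unfolding decay_class_def solves_bvp_def exp_decay_def by auto
  have h: "decays_exp_half (nonlinearity g) (12 * R^3 * A + 2 * R^4)"
    by (rule nonlinearity_decays[OF gS R])
  obtain B where B: "\<And>y. y \<ge> 0 \<Longrightarrow> \<bar>g1 y\<bar> \<le> B" using bdd unfolding bounded_iff by auto
  have "continuous_on {0..} g1"
    using continuous_on_if_has_derivative_within[of "{0..}" g1 g2] dg1 by auto
  moreover have "(g1 has_real_derivative c * g1 x + nonlinearity g x) (at x)" if x: "x > 0" for x
  proof -
    have "deriv (deriv g) x - c * deriv g x - g x ^ 4 = - conv_E (\<lambda>\<eta>. g \<eta> ^ 4) x"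
      using g x unfolding solves_bvp_def conv_E_def by blast
    then have "g2 x - c * g1 x - g x ^ 4 = - conv_E (\<lambda>\<eta>. g \<eta> ^ 4) x"
      using deriv_deriv_eq_interior[OF dg dg1 x] by simp
    then have "g2 x = c * g1 x + nonlinearity g x"
      unfolding nonlinearity_def by linarith
    then show ?thesis using has_real_derivative_at_interior[OF dg1 x] x by simp
  qed
  ultimately have g1: "g1 y = bounded_solution c (nonlinearity g) y" if "y \<ge> 0" for y
    using bounded_solution_unique[OF h c that, of g1 B] B by blast
  fix y :: real assume y: "y \<ge> 0"
  have "(g1 has_integral (g y - g 0)) {0..y}"
  proof (rule fundamental_theorem_of_calculus[OF y])
    fix x assume x: "x \<in> {0..y}"
    have "(g has_real_derivative g1 x) (at x within {0..y})"
      using dg[of x] x by (auto intro: has_field_derivative_subset)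
    then show "(g has_vector_derivative g1 x) (at x within {0..y})"
      using has_real_derivative_iff_has_vector_derivative by blast
  qed
  moreover have "integral {0..y} g1 = integral {0..y} (bounded_solution c (nonlinearity g))"
    by (rule integral_cong) (use g1 in auto)
  moreover have "g 0 = eps" using g unfolding solves_bvp_def by simp
  ultimately show "Phi c eps g y = g y" unfolding Phi_def by (simp add: integral_unique)
qed

lemma solution_exists_unique:
  assumes small: "2*A \<le> eps/2"
  shows "\<exists>f L. solves_bvp c eps f \<and> exp_decay A f L \<and>
    (\<forall>y\<ge>0. f y \<ge> (1/2) * eps) \<and> L \<ge> (1/2) * eps \<and>
    (\<forall>g. (solves_bvp c eps g \<and> (\<exists>L'. exp_decay A g L')) \<longrightarrow> (\<forall>y\<ge>0. g y = f y))"
proof -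
  obtain U L where U: "decay_class eps A U L" "\<And>y. y \<ge> 0 \<Longrightarrow> Phi c eps U y = U y"
    using fixed_point_exists by blast
  have f: "decay_class eps A (Phi c eps U) L" by (rule decay_class_cong[OF U(1)]) (simp add: U(2))
  have "solves_bvp c eps (Phi c eps U)"
    using fixed_point_solves_bvp[OF U] small A by simp
  moreover have "Phi c eps U y \<ge> (1/2) * eps" if "y \<ge> 0" for y
    using decay_class_near_initial[OF f that] small by linarith
  moreover have "L \<ge> (1/2) * eps"
    using decay_class_limit_near[OF f] small A by linarith
  moreover have "g y = Phi c eps U y" if "solves_bvp c eps g" "exp_decay A g L'" "y \<ge> 0" for g L' y
    using fixed_point_unique[OF solution_is_fixed_point[OF that(1,2)] U that(3)] U(2)[OF that(3)] by simp
  ultimately show ?thesis using decay_class_exp_decay[OF f] by blast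
qed

end

lemma small_data_eps_squared:
  fixes e :: real assumes c: "c > 0" and e: "0 < e" "e < 1/20"
  shows "small_data c e (e^2) (\<bar>e\<bar> + 2 * e^2)"
proof
  let ?R = "\<bar>e\<bar> + 2 * e^2"
  have R: "?R \<le> 2*e" "?R \<ge> 0" using e by (auto simp: power2_eq_square)
  have R234: "?R^2 \<le> (2*e)^2" "?R^3 \<le> (2*e)^3" "?R^4 \<le> (2*e)^4" using power_mono[OF R] by blast+
  have e23: "e^2 \<le> 1/400" "e^3 \<le> 1/8000"
    using power_mono[of e "1/20" 2] power_mono[of e "1/20" 3] e by (simp_all add: power_divide)
  have "4 * (12 * ?R^3 * e^2 + 2 * ?R^4) \<le> 4 * (12 * (2*e)^3 * e^2 + 2 * (2*e)^4)"
    using R234 by (intro mult_left_mono add_mono mult_right_mono) auto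
  also have "\<dots> = e^2 * (384 * e^3 + 128 * e^2)" by (simp add: algebra_simps power_numeral_reduce)
  also have "\<dots> \<le> e^2 * 1"
    using e23 by (intro mult_left_mono) auto
  finally show "4 * (12 * ?R^3 * e^2 + 2 * ?R^4) \<le> e^2" by simp
  have "4 * (20 * ?R^3 + 54 * ?R^2 * e^2) \<le> 4 * (20 * (2*e)^3 + 54 * (2*e)^2 * e^2)"
    using R234 by (intro mult_left_mono add_mono mult_right_mono) auto
  also have "\<dots> = 640 * e^3 + 864 * (e^2 * e^2)" by (simp add: algebra_simps power_numeral_reduce)
  also have "\<dots> \<le> 640 * (1/8000) + 864 * ((1/400) * (1/400))"
    using e23 by (intro add_mono mult_left_mono mult_mono) auto
  finally show "4 * (20 * ?R^3 + 54 * ?R^2 * e^2) \<le> 1/2" by simp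
qed (use c in auto)

theorem theorem2p10:
  fixes c :: real
  assumes "c > 0"
  shows "\<exists>eps0>0. \<forall>eps. 0 < eps \<and> eps < eps0 \<longrightarrow>
     (\<exists>A>0. \<exists>c0. 0 < c0 \<and> c0 < 1 \<and>
       (\<exists>f L. solves_bvp c eps f \<and> exp_decay A f L \<and>
              (\<forall>y\<ge>0. f y \<ge> c0 * eps) \<and> L \<ge> c0 * eps \<and>
              (\<forall>g. (solves_bvp c eps g \<and> (\<exists>L'. exp_decay A g L')) \<longrightarrow>
                   (\<forall>y\<ge>0. g y = f y))))"
proof (rule exI[of _ "1/20"], intro conjI allI impI, goal_cases)
  case (2 eps)
  interpret small_data c eps "eps^2" "\<bar>eps\<bar> + 2 * eps^2"
    using small_data_eps_squared[OF assms] 2 by blast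
  have "2 * eps^2 \<le> eps/2" using 2 by (simp add: power2_eq_square)
  from solution_exists_unique[OF this] show ?case
    using 2 by (intro exI[of _ "eps^2"] conjI exI[of _ "1/2"]) auto
qed simp

end
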